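(* Let $U$ be a nonnegative progressively measurable process and $W$ a utility process associated to $(h_{EZ},U)$. Suppose there exists $t_0\ge0$ such that $U_t=0$ for all $t<t_0$. Let $A\in\mathcal F_{t_0}$ and define $\widetilde U_t=\mathbb E[\mathbf 1_A\mid\mathcal F_t]U_t$. Then $\widetilde W_t=\mathbb E[\mathbf 1_AW_{t\vee t_0}\mid\mathcal F_t]$ is a utility process associated to $(h_{EZ},\widetilde U)$.
   Context: Work on a filtered probability space $(\Omega,\mathcal F,(\mathcal F_t)_{t\ge0},\mathbb P)$ with complete continuous filtration and trivial $\mathcal F_0$. $\theta>1$ is fixed and $\rho=\frac{\theta-1}{\theta}$; $h_{EZ}(u,w)=uw^\rho$. For a nonnegative progressively measurable $U$, a utility process (solution) associated to $(h_{EZ},U)$ is a nonnegative càdlàg progressively measurable $W$ with $\mathbb E\int_0^\infty U_sW_s^\rho ds<\infty$ and $W_t=\mathbb E[\int_t^\infty U_sW_s^\rho ds\mid\mathcal F_t]$ for all $t\ge0$. *)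

theory Defs
  imports "HOL-Probability.Probability"
begin

definition std_filtration :: "'a measure \<Rightarrow> (real \<Rightarrow> 'a measure) \<Rightarrow> bool" where
  "std_filtration M F \<longleftrightarrow>
     prob_space M \<and>
     (\<forall>t\<ge>0. space (F t) = space M \<and> sets (F t) \<subseteq> sets M) \<and>
     (\<forall>s t. 0 \<le> s \<longrightarrow> s \<le> t \<longrightarrow> sets (F s) \<subseteq> sets (F t)) \<and>
     (\<forall>N. N \<subseteq> space M \<and> (\<exists>B\<in>null_sets M. N \<subseteq> B) \<longrightarrow> N \<in> sets (F 0)) \<and>
     (\<forall>t\<ge>0. sets (F t) = (\<Inter>s\<in>{t<..}. sets (F s))) \<and>
     (\<forall>t>0. sets (F t) = sigma_sets (space M) (\<Union>s\<in>{0..<t}. sets (F s))) \<and>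
     (\<forall>A\<in>sets (F 0). measure M A = 0 \<or> measure M A = 1)"

definition nonneg_process :: "'a measure \<Rightarrow> (real \<Rightarrow> 'a \<Rightarrow> real) \<Rightarrow> bool" where
  "nonneg_process M X \<longleftrightarrow> (\<forall>t\<ge>0. \<forall>\<omega>\<in>space M. X t \<omega> \<ge> 0)"

definition prog_measurable :: "'a measure \<Rightarrow> (real \<Rightarrow> 'a measure) \<Rightarrow> (real \<Rightarrow> 'a \<Rightarrow> real) \<Rightarrow> bool" where
  "prog_measurable M F X \<longleftrightarrow>
     (\<forall>t\<ge>0. (\<lambda>(s,\<omega>). X s \<omega>) \<in> borel_measurable (restrict_space borel {0..t} \<Otimes>\<^sub>M F t))"

definition cadlag :: "'a measure \<Rightarrow> (real \<Rightarrow> 'a \<Rightarrow> real) \<Rightarrow> bool" where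
  "cadlag M X \<longleftrightarrow> (\<forall>\<omega>\<in>space M. \<forall>t\<ge>0.
     continuous (at_right t) (\<lambda>s. X s \<omega>) \<and>
     (t > 0 \<longrightarrow> (\<exists>l. ((\<lambda>s. X s \<omega>) \<longlongrightarrow> l) (at_left t))))"

definition h_EZ :: "real \<Rightarrow> real \<Rightarrow> real \<Rightarrow> real" where
  "h_EZ \<theta> u w = u * w powr ((\<theta> - 1) / \<theta>)"

text \<open>Utility process associated to (h,U) (U is assumed nonnegative progressive separately).\<close>
definition utility_process :: "'a measure \<Rightarrow> (real \<Rightarrow> 'a measure) \<Rightarrow> (real \<Rightarrow> real \<Rightarrow> real)
    \<Rightarrow> (real \<Rightarrow> 'a \<Rightarrow> real) \<Rightarrow> (real \<Rightarrow> 'a \<Rightarrow> real) \<Rightarrow> bool" where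
  "utility_process M F h U W \<longleftrightarrow>
     nonneg_process M W \<and> cadlag M W \<and> prog_measurable M F W \<and>
     (\<integral>\<^sup>+\<omega>. (\<integral>\<^sup>+ s\<in>{0..}. ennreal (h (U s \<omega>) (W s \<omega>)) \<partial>lborel) \<partial>M) < \<infinity> \<and>
     (\<forall>t\<ge>0. AE \<omega> in M. W t \<omega> =
        real_cond_exp M (F t)
          (\<lambda>\<omega>. enn2real (\<integral>\<^sup>+ s\<in>{t..}. ennreal (h (U s \<omega>) (W s \<omega>)) \<partial>lborel)) \<omega>)"

end

theory Submission
  imports Defs
begin

text \<open>For \<open>t \<ge> t0\<close> the process \<open>1\<^sub>A W t\<close> already is the required version. Before \<open>t0\<close>
  the utility rate \<open>U\<close> vanishes, so \<open>W\<close> is a martingale on \<open>[0, t0]\<close> and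
  \<open>V s = E[1\<^sub>A W t0 | F s]\<close> is a nonnegative martingale dominated by \<open>W\<close>. By Doob's upcrossing
  inequality almost every path of \<open>V\<close>, restricted to the rationals, crosses each rational
  interval only finitely often; as it is also bounded by the cadlag path of \<open>W\<close>, it has
  one-sided limits, and its right limits form a cadlag process. This process is adapted by right
  continuity of the filtration, and it is a version of \<open>V\<close> by Fatou's lemma applied to \<open>V\<close> and
  to \<open>W - V\<close>. Finally \<open>h_EZ \<theta> (1\<^sub>A u) (1\<^sub>A w) = 1\<^sub>A h_EZ \<theta> u w\<close> and \<open>U = 0\<close> before \<open>t0\<close>
  show that the utility integral of the new pair from \<open>t\<close> is \<open>1\<^sub>A\<close> times that of \<open>(U, W)\<close>
  from \<open>max t t0\<close>, so its recursive equation follows from that of \<open>W\<close> by the tower property.\<close>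

section \<open>Upcrossings of real sequences\<close>

text \<open>\<open>upcrossing_pending a b x k\<close>: since the last completed upcrossing of \<open>[a, b]\<close>, the
  sequence has been \<open>\<le> a\<close> at some time \<open>\<le> k\<close> but has not yet reached \<open>b\<close>.\<close>
fun upcrossing_pending :: "real \<Rightarrow> real \<Rightarrow> (nat \<Rightarrow> real) \<Rightarrow> nat \<Rightarrow> bool" where
  "upcrossing_pending a b x 0 \<longleftrightarrow> x 0 \<le> a"
| "upcrossing_pending a b x (Suc k) \<longleftrightarrow>
     (if upcrossing_pending a b x k then x (Suc k) < b else x (Suc k) \<le> a)"

fun upcrossings :: "real \<Rightarrow> real \<Rightarrow> (nat \<Rightarrow> real) \<Rightarrow> nat \<Rightarrow> nat" where
  "upcrossings a b x 0 = 0"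
| "upcrossings a b x (Suc k) =
     upcrossings a b x k + (if upcrossing_pending a b x k \<and> b \<le> x (Suc k) then 1 else 0)"

text \<open>The gain of Doob's strategy: hold one unit of \<open>x\<close> while an upcrossing is pending.\<close>
definition upcrossing_gain :: "real \<Rightarrow> real \<Rightarrow> (nat \<Rightarrow> real) \<Rightarrow> nat \<Rightarrow> real" where
  "upcrossing_gain a b x n = (\<Sum>k<n. if upcrossing_pending a b x k then x (Suc k) - x k else 0)"

lemma upcrossing_gain_lower_bound:
  assumes "a < b"
  shows "(b - a) * real (upcrossings a b x n) \<le> upcrossing_gain a b x n + max 0 (a - x n)"
proof -
  have "if upcrossing_pending a b x n
        then (b - a) * real (upcrossings a b x n) + x n - a \<le> upcrossing_gain a b x n
        else (b - a) * real (upcrossings a b x n) \<le> upcrossing_gain a b x n"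
  proof (induction n)
    case 0
    then show ?case by (simp add: upcrossing_gain_def)
  next
    case (Suc k)
    then show ?case
      using assms by (auto simp: upcrossing_gain_def algebra_simps split: if_splits)
  qed
  then show ?thesis by (auto split: if_splits)
qed

lemma mono_upcrossings: "mono (upcrossings a b x)"
  by (rule incseq_SucI) simp

lemma upcrossing_pending_if_le: "x i \<le> a \<Longrightarrow> a < b \<Longrightarrow> upcrossing_pending a b x i"
  by (cases i) auto

lemma upcrossings_less_if_pending:
  assumes "upcrossing_pending a b x i" "i < j" "b \<le> x j"
  shows "upcrossings a b x i < upcrossings a b x j"
proof -
  have "upcrossing_pending a b x k \<and> upcrossings a b x i \<le> upcrossings a b x k
        \<or> upcrossings a b x i < upcrossings a b x k" if "i \<le> k" for k
    using that
  proof (induction k)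
    case (Suc k)
    then show ?case using assms(1) by (cases "i = Suc k") auto
  qed (use assms(1) in simp)
  from this[of "j - 1"] show ?thesis
    using assms(2,3) by (cases j) auto
qed

definition upcrossing_chain ::
    "(real \<Rightarrow> real) \<Rightarrow> real set \<Rightarrow> real \<Rightarrow> real \<Rightarrow> nat \<Rightarrow> real list \<Rightarrow> bool" where
  "upcrossing_chain f D a b N l \<longleftrightarrow> length l = 2 * N \<and> sorted_wrt (<) l \<and> set l \<subseteq> D \<and>
     (\<forall>i<N. f (l ! (2 * i)) \<le> a \<and> b \<le> f (l ! (2 * i + 1)))"

lemma upcrossing_chain_mono:
  "upcrossing_chain f D a b N l \<Longrightarrow> D \<subseteq> D' \<Longrightarrow> upcrossing_chain f D' a b N l"
  by (auto simp: upcrossing_chain_def)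

lemma upcrossing_chain_range_iff:
  fixes e :: "nat \<Rightarrow> real"
  shows "upcrossing_chain f (range e) a b N l \<longleftrightarrow> (\<exists>m. upcrossing_chain f (e ` {..m}) a b N l)"
proof
  assume chain: "upcrossing_chain f (range e) a b N l"
  then obtain C where "finite C" "set l = e ` C"
    using finite_subset_image[of "set l" e UNIV] by (auto simp: upcrossing_chain_def)
  moreover obtain m where "C \<subseteq> {..<m}" using finite_nat_bounded[OF \<open>finite C\<close>] by blast
  ultimately have "set l \<subseteq> e ` {..m}" by auto
  with chain show "\<exists>m. upcrossing_chain f (e ` {..m}) a b N l"
    by (auto simp: upcrossing_chain_def)
qed (auto elim: upcrossing_chain_mono)

lemma upcrossings_ge_if_alternating:
  assumes ab: "a < b" and p: "\<And>i j. i < j \<Longrightarrow> j < 2 * N \<Longrightarrow> p i < p j"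
    and low: "\<And>i. i < N \<Longrightarrow> x (p (2 * i)) \<le> a" and high: "\<And>i. i < N \<Longrightarrow> b \<le> x (p (2 * i + 1))"
  shows "m < N \<Longrightarrow> Suc m \<le> upcrossings a b x (p (2 * m + 1))"
proof (induction m)
  case 0
  have "upcrossing_pending a b x (p 0)"
    using low[of 0] 0 ab by (intro upcrossing_pending_if_le) simp
  then show ?case
    using upcrossings_less_if_pending[of a b x "p 0" "p 1"] p[of 0 1] high[of 0] 0 by simp
next
  case (Suc m)
  have "upcrossing_pending a b x (p (2 * Suc m))"
    using low[of "Suc m"] Suc.prems ab by (intro upcrossing_pending_if_le) simp
  then have "upcrossings a b x (p (2 * Suc m)) < upcrossings a b x (p (2 * Suc m + 1))"
    using upcrossings_less_if_pending[of a b x "p (2 * Suc m)" "p (2 * Suc m + 1)"]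
      p[of "2 * Suc m" "2 * Suc m + 1"] high[of "Suc m"] Suc.prems by simp
  moreover have "upcrossings a b x (p (2 * m + 1)) \<le> upcrossings a b x (p (2 * Suc m))"
    using Suc.prems p[of "2 * m + 1" "2 * Suc m"] by (intro monoD[OF mono_upcrossings]) auto
  ultimately show ?case using Suc by simp
qed

lemma upcrossing_chain_le_upcrossings:
  assumes ab: "a < b" and \<tau>: "sorted_wrt (<) \<tau>"
    and chain: "upcrossing_chain f (set \<tau>) a b N l"
  shows "N \<le> upcrossings a b (\<lambda>k. f (\<tau> ! k)) (length \<tau> - 1)"
proof (cases "N = 0")
  case False
  let ?x = "\<lambda>k. f (\<tau> ! k)"
  have len: "length l = 2 * N" and sorted_l: "sorted_wrt (<) l" and sub: "set l \<subseteq> set \<tau>"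
    using chain by (auto simp: upcrossing_chain_def)
  obtain p where p: "\<And>i. i < 2 * N \<Longrightarrow> p i < length \<tau> \<and> \<tau> ! p i = l ! i"
  proof -
    have "\<forall>i. \<exists>k. i < 2 * N \<longrightarrow> k < length \<tau> \<and> \<tau> ! k = l ! i"
      using sub len by (metis in_set_conv_nth nth_mem subsetD)
    from choice[OF this] show ?thesis using that by blast
  qed
  have p_less: "p i < p j" if "i < j" "j < 2 * N" for i j
  proof (rule ccontr)
    assume "\<not> p i < p j"
    then have "p j = p i \<or> p j < p i" by auto
    then have "\<tau> ! p j \<le> \<tau> ! p i"
      using sorted_wrt_nth_less[OF \<tau>, of "p j" "p i"] p[of i] that by auto
    moreover have "l ! i < l ! j" using sorted_l that len by (simp add: sorted_wrt_nth_less)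
    ultimately show False using p[of i] p[of j] that by simp
  qed
  have "Suc (N - 1) \<le> upcrossings a b ?x (p (2 * (N - 1) + 1))"
  proof (rule upcrossings_ge_if_alternating[OF ab p_less])
    show "?x (p (2 * i)) \<le> a" "b \<le> ?x (p (2 * i + 1))" if "i < N" for i
      using chain p[of "2 * i"] p[of "2 * i + 1"] that by (auto simp: upcrossing_chain_def)
  qed (use False in auto)
  moreover have "2 * (N - 1) + 1 = 2 * N - 1" using False by simp
  ultimately have "N \<le> upcrossings a b ?x (p (2 * N - 1))"
    using False by simp
  also have "\<dots> \<le> upcrossings a b ?x (length \<tau> - 1)"
    using p[of "2 * N - 1"] False by (intro monoD[OF mono_upcrossings]) auto
  finally show ?thesis .
qed simp

section \<open>Filtered probability spaces\<close>

locale std_filtered_space =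
  fixes M :: "'a measure" and F :: "real \<Rightarrow> 'a measure"
  assumes std_filtration: "std_filtration M F"
begin

sublocale prob_space M
  using std_filtration by (simp only: std_filtration_def)

lemma std_filtrationD:
  "0 \<le> t \<Longrightarrow> space (F t) = space M"
  "0 \<le> t \<Longrightarrow> sets (F t) \<subseteq> sets M"
  "0 \<le> s \<Longrightarrow> s \<le> t \<Longrightarrow> sets (F s) \<subseteq> sets (F t)"
  "N \<subseteq> space M \<Longrightarrow> B \<in> null_sets M \<Longrightarrow> N \<subseteq> B \<Longrightarrow> N \<in> sets (F 0)"
  "0 \<le> t \<Longrightarrow> sets (F t) = (\<Inter>s\<in>{t<..}. sets (F s))"
  using std_filtration unfolding std_filtration_def by (elim conjE; metis)+

lemmas space_F = std_filtrationD(1)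
  and sets_F_subset = std_filtrationD(2)
  and sets_F_mono = std_filtrationD(3)
  and null_subset_in_F0 = std_filtrationD(4)
  and sets_F_right_continuous = std_filtrationD(5)

lemma subalgebra_F: "0 \<le> t \<Longrightarrow> subalgebra M (F t)"
  by (simp add: subalgebra_def space_F sets_F_subset)

lemma subalgebra_F_F: "0 \<le> s \<Longrightarrow> s \<le> t \<Longrightarrow> subalgebra (F t) (F s)"
  by (simp add: subalgebra_def space_F sets_F_mono)

lemma sigma_finite_subalgebra_F: "0 \<le> t \<Longrightarrow> sigma_finite_subalgebra M (F t)"
  by (intro finite_measure_subalgebra_is_sigma_finite finite_measure_subalgebra.intro
      finite_measure_subalgebra_axioms.intro subalgebra_F finite_measure_axioms)

lemma measurable_F_imp_M: "0 \<le> t \<Longrightarrow> f \<in> F t \<rightarrow>\<^sub>M N \<Longrightarrow> f \<in> M \<rightarrow>\<^sub>M N"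
  by (rule measurable_from_subalg[OF subalgebra_F])

lemma measurable_F_mono: "0 \<le> s \<Longrightarrow> s \<le> t \<Longrightarrow> f \<in> F s \<rightarrow>\<^sub>M N \<Longrightarrow> f \<in> F t \<rightarrow>\<^sub>M N"
  by (rule measurable_from_subalg[OF subalgebra_F_F])

lemma sets_F_imp_M: "0 \<le> t \<Longrightarrow> A \<in> sets (F t) \<Longrightarrow> A \<in> sets M"
  using sets_F_subset by blast

lemma AE_set_in_F:
  assumes "AE \<omega> in M. P \<omega>" "0 \<le> t"
  shows "{\<omega>\<in>space M. P \<omega>} \<in> sets (F t)"
proof -
  obtain N where N: "{\<omega>\<in>space M. \<not> P \<omega>} \<subseteq> N" "N \<in> null_sets M"
    using assms(1) by (auto elim!: AE_E)
  have "{\<omega>\<in>space M. \<not> P \<omega>} \<in> sets (F 0)"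
    using N by (intro null_subset_in_F0) auto
  then have "space (F 0) - {\<omega>\<in>space M. \<not> P \<omega>} \<in> sets (F 0)"
    by (rule sets.compl_sets)
  also have "space (F 0) - {\<omega>\<in>space M. \<not> P \<omega>} = {\<omega>\<in>space M. P \<omega>}"
    using space_F[of 0] by auto
  finally show ?thesis
    using sets_F_mono[of 0 t] assms(2) by blast
qed

lemma measurable_F_right_continuous:
  fixes f :: "'a \<Rightarrow> real"
  assumes "0 \<le> t" "\<And>r. t < r \<Longrightarrow> f \<in> borel_measurable (F r)"
  shows "f \<in> borel_measurable (F t)"
proof (rule measurableI)
  fix B :: "real set"
  assume "B \<in> sets borel"
  have "f -` B \<inter> space (F t) \<in> sets (F r)" if "t < r" for r
    using measurable_sets[OF assms(2)[OF that] \<open>B \<in> sets borel\<close>] that assms(1) by (simp add: space_F)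
  then show "f -` B \<inter> space (F t) \<in> sets (F t)"
    using sets_F_right_continuous[OF assms(1)] by blast
qed simp

text \<open>The index is clamped at \<open>0\<close> because \<open>F\<close> is only constrained on \<open>[0, \<infinity>)\<close>.\<close>
definition cond_exp_process :: "('a \<Rightarrow> real) \<Rightarrow> real \<Rightarrow> 'a \<Rightarrow> real" where
  "cond_exp_process Y s = real_cond_exp M (F (max 0 s)) Y"

lemma cond_exp_process_measurable_F: "cond_exp_process Y s \<in> borel_measurable (F (max 0 s))"
  unfolding cond_exp_process_def by simp

lemma cond_exp_process_measurable [measurable]: "cond_exp_process Y s \<in> borel_measurable M"
  by (rule measurable_F_imp_M[OF _ cond_exp_process_measurable_F]) simp

lemma integrable_cond_exp_process: "integrable M Y \<Longrightarrow> integrable M (cond_exp_process Y s)"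
  unfolding cond_exp_process_def
  by (rule sigma_finite_subalgebra.real_cond_exp_int(1)[OF sigma_finite_subalgebra_F]) auto

lemma integral_indicator_cond_exp_process:
  assumes "integrable M Y" "0 \<le> s" "B \<in> sets (F s)"
  shows "(\<integral>\<omega>. indicator B \<omega> * cond_exp_process Y s \<omega> \<partial>M) = (\<integral>\<omega>. indicator B \<omega> * Y \<omega> \<partial>M)"
  using sigma_finite_subalgebra.real_cond_exp_intA[OF sigma_finite_subalgebra_F[OF assms(2)] assms(1,3)]
    assms(2)
  by (simp add: cond_exp_process_def set_lebesgue_integral_def)

lemma cond_exp_process_nonneg:
  assumes "integrable M Y" "AE \<omega> in M. 0 \<le> Y \<omega>"
  shows "AE \<omega> in M. 0 \<le> cond_exp_process Y s \<omega>"
  unfolding cond_exp_process_def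
  by (rule sigma_finite_subalgebra.real_cond_exp_pos[OF sigma_finite_subalgebra_F]) (use assms in auto)

end

section \<open>Doob's upcrossing inequality\<close>

context std_filtered_space
begin

lemma upcrossing_pending_measurable:
  assumes \<tau>: "sorted_wrt (<) \<tau>" "\<forall>s\<in>set \<tau>. 0 \<le> s" and k: "k < length \<tau>"
  shows "Measurable.pred (F (\<tau> ! k))
           (\<lambda>\<omega>. upcrossing_pending a b (\<lambda>i. cond_exp_process Y (\<tau> ! i) \<omega>) k)"
  using k
proof (induction k)
  case 0
  then have "0 \<le> \<tau> ! 0" using \<tau> by simp
  then have [measurable]: "cond_exp_process Y (\<tau> ! 0) \<in> borel_measurable (F (\<tau> ! 0))"
    using cond_exp_process_measurable_F[of Y "\<tau> ! 0"] by simp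
  show ?case unfolding upcrossing_pending.simps by measurable
next
  case (Suc k)
  have nonneg: "0 \<le> \<tau> ! k" "0 \<le> \<tau> ! Suc k" using \<tau> Suc.prems by simp_all
  have "\<tau> ! k \<le> \<tau> ! Suc k" using \<tau>(1) Suc.prems by (simp add: sorted_wrt_nth_less less_imp_le)
  from measurable_F_mono[OF nonneg(1) this Suc.IH] Suc.prems
  have [measurable]: "Measurable.pred (F (\<tau> ! Suc k))
      (\<lambda>\<omega>. upcrossing_pending a b (\<lambda>i. cond_exp_process Y (\<tau> ! i) \<omega>) k)"
    by simp
  have [measurable]: "cond_exp_process Y (\<tau> ! Suc k) \<in> borel_measurable (F (\<tau> ! Suc k))"
    using cond_exp_process_measurable_F[of Y "\<tau> ! Suc k"] nonneg by simp
  show ?case unfolding upcrossing_pending.simps by measurable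
qed

lemma upcrossing_chain_event_measurable:
  assumes "finite G"
  shows "{\<omega>\<in>space M. \<exists>l. upcrossing_chain (\<lambda>s. cond_exp_process Y s \<omega>) G a b N l} \<in> sets M"
proof -
  let ?L = "{l. set l \<subseteq> G \<and> length l = 2 * N}"
  have "Measurable.pred M (\<lambda>\<omega>. \<exists>l\<in>?L. upcrossing_chain (\<lambda>s. cond_exp_process Y s \<omega>) G a b N l)"
    using finite_lists_length_eq[OF assms] unfolding upcrossing_chain_def by measurable
  moreover have "(\<exists>l\<in>?L. upcrossing_chain f G a b N l) \<longleftrightarrow> (\<exists>l. upcrossing_chain f G a b N l)" for f
    by (auto simp: upcrossing_chain_def)
  ultimately show ?thesis by (simp add: pred_def)
qed

lemma integral_upcrossing_gain:
  assumes \<tau>: "sorted_wrt (<) \<tau>" "\<forall>s\<in>set \<tau>. 0 \<le> s" and n: "n < length \<tau>"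
    and Y: "integrable M Y"
  defines "x \<equiv> \<lambda>\<omega> k. cond_exp_process Y (\<tau> ! k) \<omega>"
  shows "integrable M (\<lambda>\<omega>. upcrossing_gain a b (x \<omega>) n)"
    and "(\<integral>\<omega>. upcrossing_gain a b (x \<omega>) n \<partial>M) = 0"
proof -
  define S where "S k = {\<omega>\<in>space M. upcrossing_pending a b (x \<omega>) k}" for k
  define g where "g = (\<lambda>k \<omega>. indicator (S k) \<omega> * (x \<omega> (Suc k) - x \<omega> k))"
  have gain: "upcrossing_gain a b (x \<omega>) n = (\<Sum>k<n. g k \<omega>)" if "\<omega> \<in> space M" for \<omega>
    unfolding upcrossing_gain_def g_def S_def using that by (intro sum.cong) auto
  have g: "integrable M (g k) \<and> (\<integral>\<omega>. g k \<omega> \<partial>M) = 0" if "k < n" for k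
  proof -
    have k: "k < length \<tau>" "Suc k < length \<tau>" using that n by simp_all
    have nonneg: "0 \<le> \<tau> ! k" "\<tau> ! k \<le> \<tau> ! Suc k"
      using \<tau> k by (auto simp: sorted_wrt_nth_less less_imp_le)
    have S_F: "S k \<in> sets (F (\<tau> ! k))"
      using upcrossing_pending_measurable[OF \<tau> k(1), of a b Y] space_F[OF nonneg(1)]
      by (simp add: S_def x_def pred_def)
    then have S_F': "S k \<in> sets (F (\<tau> ! Suc k))"
      using sets_F_mono[OF nonneg] by blast
    have S_M: "S k \<in> sets M" using S_F nonneg(1) by (rule sets_F_imp_M[rotated])
    have int: "integrable M (\<lambda>\<omega>. indicator (S k) \<omega> * x \<omega> i)" for i
      using integrable_mult_indicator[OF S_M integrable_cond_exp_process[OF Y]]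
      by (simp add: x_def)
    have int_g: "integrable M (g k)"
      using Bochner_Integration.integrable_diff[OF int int] by (simp add: g_def right_diff_distrib)
    have "(\<integral>\<omega>. g k \<omega> \<partial>M)
        = (\<integral>\<omega>. indicator (S k) \<omega> * x \<omega> (Suc k) \<partial>M) - (\<integral>\<omega>. indicator (S k) \<omega> * x \<omega> k \<partial>M)"
      using int by (simp add: g_def right_diff_distrib)
    also have "\<dots> = 0"
      using integral_indicator_cond_exp_process[OF Y _ S_F] integral_indicator_cond_exp_process[OF Y _ S_F']
        nonneg by (simp add: x_def)
    finally show ?thesis using int_g by simp
  qed
  show "integrable M (\<lambda>\<omega>. upcrossing_gain a b (x \<omega>) n)"
    using g by (subst Bochner_Integration.integrable_cong[OF refl gain]) auto
  have "(\<integral>\<omega>. upcrossing_gain a b (x \<omega>) n \<partial>M) = (\<integral>\<omega>. (\<Sum>k<n. g k \<omega>) \<partial>M)"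
    by (rule Bochner_Integration.integral_cong[OF refl gain])
  also have "\<dots> = 0" using g by (simp add: integral_sum)
  finally show "(\<integral>\<omega>. upcrossing_gain a b (x \<omega>) n \<partial>M) = 0" .
qed

lemma upcrossing_inequality:
  assumes \<tau>: "sorted_wrt (<) \<tau>" "\<tau> \<noteq> []" "\<forall>s\<in>set \<tau>. 0 \<le> s" and ab: "a < b"
    and Y: "integrable M Y" "AE \<omega> in M. 0 \<le> Y \<omega>"
  shows "real N * prob {\<omega>\<in>space M. \<exists>l. upcrossing_chain (\<lambda>s. cond_exp_process Y s \<omega>) (set \<tau>) a b N l}
           \<le> max 0 a / (b - a)"
proof -
  define n where "n = length \<tau> - 1"
  define x where "x = (\<lambda>\<omega> k. cond_exp_process Y (\<tau> ! k) \<omega>)"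
  define C where "C = {\<omega>\<in>space M. \<exists>l. upcrossing_chain (\<lambda>s. cond_exp_process Y s \<omega>) (set \<tau>) a b N l}"
  have n: "n < length \<tau>" using \<tau>(2) by (simp add: n_def)
  have C: "C \<in> sets M" unfolding C_def by (rule upcrossing_chain_event_measurable) simp
  have gain: "integrable M (\<lambda>\<omega>. upcrossing_gain a b (x \<omega>) n)"
    "(\<integral>\<omega>. upcrossing_gain a b (x \<omega>) n \<partial>M) = 0"
    using integral_upcrossing_gain[OF \<tau>(1,3) n Y(1), where a=a and b=b] by (simp_all add: x_def)
  have shortfall: "integrable M (\<lambda>\<omega>. max 0 (a - x \<omega> n))"
    using integrable_cond_exp_process[OF Y(1)] by (auto simp: x_def)
  have "AE \<omega> in M. max 0 (a - x \<omega> n) \<le> max 0 a"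
    using cond_exp_process_nonneg[OF Y, of "\<tau> ! n"] by eventually_elim (auto simp: x_def)
  then have "(\<integral>\<omega>. max 0 (a - x \<omega> n) \<partial>M) \<le> (\<integral>\<omega>. max 0 a \<partial>M)"
    by (intro integral_mono_AE shortfall) auto
  then have shortfall_le: "(\<integral>\<omega>. max 0 (a - x \<omega> n) \<partial>M) \<le> max 0 a"
    by (simp add: prob_space)
  have pointwise: "(b - a) * real N * indicator C \<omega> \<le> upcrossing_gain a b (x \<omega>) n + max 0 (a - x \<omega> n)"
    for \<omega>
  proof -
    have "real N * indicator C \<omega> \<le> real (upcrossings a b (x \<omega>) n)"
      using upcrossing_chain_le_upcrossings[OF ab \<tau>(1)]
      by (auto simp: C_def x_def n_def indicator_def)
    then have "(b - a) * real N * indicator C \<omega> \<le> (b - a) * real (upcrossings a b (x \<omega>) n)"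
      using ab by (simp add: mult.assoc)
    then show ?thesis using upcrossing_gain_lower_bound[OF ab] by (rule order_trans)
  qed
  have "(b - a) * real N * prob C = (\<integral>\<omega>. (b - a) * real N * indicator C \<omega> \<partial>M)"
    using C by simp
  also have "\<dots> \<le> (\<integral>\<omega>. upcrossing_gain a b (x \<omega>) n + max 0 (a - x \<omega> n) \<partial>M)"
    using C gain(1) shortfall pointwise by (intro integral_mono) (auto simp: emeasure_eq_measure)
  also have "\<dots> \<le> max 0 a"
    using gain shortfall shortfall_le by simp
  finally show ?thesis
    using ab by (simp add: C_def pos_le_divide_eq mult.commute mult.left_commute)
qed

lemma upcrossing_chain_event_range:
  fixes e :: "nat \<Rightarrow> real" and N :: nat
  assumes e: "range e \<subseteq> {0..}" and ab: "a < b"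
    and Y: "integrable M Y" "AE \<omega> in M. 0 \<le> Y \<omega>"
  defines "C \<equiv> {\<omega>\<in>space M. \<exists>l. upcrossing_chain (\<lambda>s. cond_exp_process Y s \<omega>) (range e) a b N l}"
  shows "C \<in> sets M" and "real N * prob C \<le> max 0 a / (b - a)"
proof -
  define Cm where
    "Cm m = {\<omega>\<in>space M. \<exists>l. upcrossing_chain (\<lambda>s. cond_exp_process Y s \<omega>) (e ` {..m}) a b N l}"
    for m
  have C_eq: "C = (\<Union>m. Cm m)"
    by (auto simp: C_def Cm_def upcrossing_chain_range_iff)
  have Cm: "Cm m \<in> sets M" for m
    unfolding Cm_def by (rule upcrossing_chain_event_measurable) simp
  then show "C \<in> sets M" by (simp add: C_eq)
  have "incseq Cm"
  proof (rule monoI)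
    fix m n :: nat
    assume "m \<le> n"
    then have "e ` {..m} \<subseteq> e ` {..n}" by auto
    then show "Cm m \<subseteq> Cm n" by (auto simp: Cm_def intro: upcrossing_chain_mono)
  qed
  then have "(\<lambda>m. prob (Cm m)) \<longlonglongrightarrow> prob C"
    unfolding C_eq using Cm by (intro finite_Lim_measure_incseq) auto
  moreover have "real N * prob (Cm m) \<le> max 0 a / (b - a)" for m
    using upcrossing_inequality[of "sorted_list_of_set (e ` {..m})" a b Y N] e ab Y
    by (auto simp: Cm_def)
  ultimately show "real N * prob C \<le> max 0 a / (b - a)"
    by (intro LIMSEQ_le_const2[OF tendsto_mult_left]) auto
qed

lemma AE_finitely_many_upcrossings:
  assumes D: "countable D" "D \<subseteq> {0..}" and ab: "a < b"
    and Y: "integrable M Y" "AE \<omega> in M. 0 \<le> Y \<omega>"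
  shows "AE \<omega> in M. \<exists>N. \<forall>l. \<not> upcrossing_chain (\<lambda>s. cond_exp_process Y s \<omega>) D a b N l"
proof (cases "D = {}")
  case True
  then show ?thesis by (auto simp: upcrossing_chain_def intro!: exI[of _ 1])
next
  case False
  define C where "C N = {\<omega>\<in>space M. \<exists>l. upcrossing_chain (\<lambda>s. cond_exp_process Y s \<omega>) D a b N l}"
    for N
  have D_eq: "range (from_nat_into D) = D" using range_from_nat_into[OF False D(1)] .
  note C_range = upcrossing_chain_event_range[of "from_nat_into D", unfolded D_eq, OF D(2) ab Y]
  have C: "C N \<in> sets M" for N
    using C_range(1) by (simp add: C_def)
  define K where "K = max 0 a / (b - a)"
  have "prob (\<Inter>N. C N) \<le> K / real (Suc n)" for n
  proof -
    have "prob (\<Inter>N. C N) \<le> prob (C (Suc n))" using C by (intro finite_measure_mono) auto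
    also have "\<dots> \<le> K / real (Suc n)"
      using C_range(2)[of "Suc n", folded K_def]
      by (simp add: C_def pos_le_divide_eq mult.commute del: of_nat_Suc)
    finally show ?thesis .
  qed
  then have "prob (\<Inter>N. C N) \<le> 0"
    by (intro LIMSEQ_le_const[OF LIMSEQ_Suc[OF lim_const_over_n]]) auto
  then have "(\<Inter>N. C N) \<in> null_sets M"
    using C measure_nonneg[of M "\<Inter>N. C N"]
    by (auto simp: emeasure_eq_measure null_sets_def intro!: antisym)
  then show ?thesis
    by (rule AE_I') (auto simp: C_def)
qed

lemma AE_finitely_many_upcrossings_Rats:
  assumes D: "countable D" "D \<subseteq> {0..}"
    and Y: "integrable M Y" "AE \<omega> in M. 0 \<le> Y \<omega>"
  shows "AE \<omega> in M. \<forall>a\<in>\<rat>. \<forall>b\<in>\<rat>. a < b \<longrightarrow>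
           (\<exists>N. \<forall>l. \<not> upcrossing_chain (\<lambda>s. cond_exp_process Y s \<omega>) D a b N l)"
proof -
  have "AE \<omega> in M. a < b \<longrightarrow> (\<exists>N. \<forall>l. \<not> upcrossing_chain (\<lambda>s. cond_exp_process Y s \<omega>) D a b N l)"
    for a b :: real
    using AE_finitely_many_upcrossings[OF D _ Y, of a b] by (cases "a < b") auto
  then show ?thesis
    by (simp add: AE_ball_countable countable_rat)
qed

end

section \<open>One-sided limits along a dense set\<close>

lemma tendsto_of_no_oscillation:
  fixes \<phi> :: "'b \<Rightarrow> real"
  assumes F: "F \<noteq> bot" and bounded: "eventually (\<lambda>s. \<bar>\<phi> s\<bar> \<le> B) F"
    and no_oscillation: "\<And>a b. a \<in> \<rat> \<Longrightarrow> b \<in> \<rat> \<Longrightarrow> a < b \<Longrightarrow>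
       (\<exists>\<^sub>F s in F. \<phi> s \<le> a) \<Longrightarrow> (\<exists>\<^sub>F s in F. b \<le> \<phi> s) \<Longrightarrow> False"
  shows "\<exists>l. (\<phi> \<longlongrightarrow> l) F"
proof -
  let ?f = "\<lambda>s. ereal (\<phi> s)"
  have "ereal (- B) \<le> Liminf F ?f" "Limsup F ?f \<le> ereal B"
    using bounded by (auto intro!: Liminf_bounded Limsup_bounded elim!: eventually_mono)
  moreover have "Liminf F ?f \<le> Limsup F ?f" using F by (rule Liminf_le_Limsup)
  ultimately obtain l u where l: "Liminf F ?f = ereal l" and u: "Limsup F ?f = ereal u"
    by (cases "Liminf F ?f"; cases "Limsup F ?f") auto
  have "\<not> l < u"
  proof
    assume "l < u"
    then obtain a b where ab: "a \<in> \<rat>" "b \<in> \<rat>" "l < a" "a < b" "b < u"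
      by (metis Rats_dense_in_real)
    have "\<not> ereal a \<le> Liminf F ?f" using l ab(3) by simp
    then obtain y where "y < ereal a" "\<exists>\<^sub>F s in F. ?f s \<le> y"
      unfolding le_Liminf_iff by (auto simp: not_eventually not_less)
    then have low: "\<exists>\<^sub>F s in F. \<phi> s \<le> a"
      by (elim frequently_elim1) (metis ereal_less_eq(3) order.strict_trans1 less_imp_le)
    have "\<not> Limsup F ?f \<le> ereal b" using u ab(5) by simp
    then obtain y where "ereal b < y" "\<exists>\<^sub>F s in F. y \<le> ?f s"
      unfolding Limsup_le_iff by (auto simp: not_eventually not_less)
    then have high: "\<exists>\<^sub>F s in F. b \<le> \<phi> s"
      by (elim frequently_elim1) (metis ereal_less_eq(3) order.strict_trans2 less_imp_le)
    show False using no_oscillation[OF ab(1,2,4) low high] .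
  qed
  then have "Limsup F ?f = ereal l"
    using l u \<open>Liminf F ?f \<le> Limsup F ?f\<close> by simp
  then have "(?f \<longlongrightarrow> ereal l) F" using F l by (intro Liminf_eq_Limsup) auto
  then show ?thesis by auto
qed

lemma upcrossing_chain_snoc:
  assumes "upcrossing_chain \<phi> D a b N l" "set l \<subseteq> {..<q}" "q < p"
    and "q \<in> D" "p \<in> D" "\<phi> q \<le> a" "b \<le> \<phi> p"
  shows "upcrossing_chain \<phi> D a b (Suc N) (l @ [q, p])"
  using assms by (auto simp: upcrossing_chain_def sorted_wrt_append nth_append less_Suc_eq)

lemma upcrossing_chain_Cons:
  assumes "upcrossing_chain \<phi> D a b N l" "set l \<subseteq> {p<..}" "q < p"
    and "q \<in> D" "p \<in> D" "\<phi> q \<le> a" "b \<le> \<phi> p"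
  shows "upcrossing_chain \<phi> D a b (Suc N) (q # p # l)"
  using assms by (auto simp: upcrossing_chain_def less_Suc_eq_0_disj)

lemma frequently_at_right_withinD:
  fixes t :: real
  assumes "\<exists>\<^sub>F s in at t within (D \<inter> {t<..}). P s" "t < u"
  shows "\<exists>s\<in>D. t < s \<and> s < u \<and> P s"
  using assms unfolding frequently_def eventually_at
  by (auto simp: dist_real_def dest!: spec[of _ "u - t"])

lemma frequently_at_left_withinD:
  fixes t :: real
  assumes "\<exists>\<^sub>F s in at t within (D \<inter> {..<t}). P s" "u < t"
  shows "\<exists>s\<in>D. u < s \<and> s < t \<and> P s"
  using assms unfolding frequently_def eventually_at
  by (auto simp: dist_real_def dest!: spec[of _ "t - u"])

lemma upcrossing_chain_if_oscillating_at_right: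
  fixes \<phi> :: "real \<Rightarrow> real"
  assumes low: "\<exists>\<^sub>F s in at t within (D \<inter> {t<..}). \<phi> s \<le> a"
    and high: "\<exists>\<^sub>F s in at t within (D \<inter> {t<..}). b \<le> \<phi> s"
  shows "\<exists>l. upcrossing_chain \<phi> D a b N l"
proof -
  have "\<forall>u>t. \<exists>l. upcrossing_chain \<phi> D a b N l \<and> set l \<subseteq> {t<..<u}"
  proof (induction N)
    case 0
    show ?case by (auto simp: upcrossing_chain_def)
  next
    case (Suc N)
    show ?case
    proof (intro allI impI)
      fix u assume "t < u"
      obtain p where p: "p \<in> D" "t < p" "p < u" "b \<le> \<phi> p"
        using frequently_at_right_withinD[OF high \<open>t < u\<close>] by blast
      obtain q where q: "q \<in> D" "t < q" "q < p" "\<phi> q \<le> a"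
        using frequently_at_right_withinD[OF low \<open>t < p\<close>] by blast
      obtain l where l: "upcrossing_chain \<phi> D a b N l" "set l \<subseteq> {t<..<q}"
        using Suc.IH \<open>t < q\<close> by blast
      have "upcrossing_chain \<phi> D a b (Suc N) (l @ [q, p])"
        using l p q by (intro upcrossing_chain_snoc) auto
      moreover have "set (l @ [q, p]) \<subseteq> {t<..<u}" using l p q by auto
      ultimately show "\<exists>l. upcrossing_chain \<phi> D a b (Suc N) l \<and> set l \<subseteq> {t<..<u}" by blast
    qed
  qed
  from this[rule_format, of "t + 1"] show ?thesis by auto
qed

lemma upcrossing_chain_if_oscillating_at_left:
  fixes \<phi> :: "real \<Rightarrow> real"
  assumes low: "\<exists>\<^sub>F s in at t within (D \<inter> {..<t}). \<phi> s \<le> a"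
    and high: "\<exists>\<^sub>F s in at t within (D \<inter> {..<t}). b \<le> \<phi> s"
  shows "\<exists>l. upcrossing_chain \<phi> D a b N l"
proof -
  have "\<forall>u<t. \<exists>l. upcrossing_chain \<phi> D a b N l \<and> set l \<subseteq> {u<..<t}"
  proof (induction N)
    case 0
    show ?case by (auto simp: upcrossing_chain_def)
  next
    case (Suc N)
    show ?case
    proof (intro allI impI)
      fix u assume "u < t"
      obtain q where q: "q \<in> D" "u < q" "q < t" "\<phi> q \<le> a"
        using frequently_at_left_withinD[OF low \<open>u < t\<close>] by blast
      obtain p where p: "p \<in> D" "q < p" "p < t" "b \<le> \<phi> p"
        using frequently_at_left_withinD[OF high \<open>q < t\<close>] by blast
      obtain l where l: "upcrossing_chain \<phi> D a b N l" "set l \<subseteq> {p<..<t}"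
        using Suc.IH \<open>p < t\<close> by blast
      have "upcrossing_chain \<phi> D a b (Suc N) (q # p # l)"
        using l p q by (intro upcrossing_chain_Cons) auto
      moreover have "set (q # p # l) \<subseteq> {u<..<t}" using l p q by auto
      ultimately show "\<exists>l. upcrossing_chain \<phi> D a b (Suc N) l \<and> set l \<subseteq> {u<..<t}" by blast
    qed
  qed
  from this[rule_format, of "t - 1"] show ?thesis by auto
qed

lemma tendsto_at_right_within_if_finitely_many_upcrossings:
  fixes \<phi> :: "real \<Rightarrow> real"
  assumes "\<forall>a\<in>\<rat>. \<forall>b\<in>\<rat>. a < b \<longrightarrow> (\<exists>N. \<forall>l. \<not> upcrossing_chain \<phi> D a b N l)"
    and "at t within (D \<inter> {t<..}) \<noteq> bot"
    and "eventually (\<lambda>s. \<bar>\<phi> s\<bar> \<le> B) (at t within (D \<inter> {t<..}))"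
  shows "\<exists>l. (\<phi> \<longlongrightarrow> l) (at t within (D \<inter> {t<..}))"
  using assms(2,3) by (rule tendsto_of_no_oscillation)
    (use assms(1) upcrossing_chain_if_oscillating_at_right in blast)

lemma tendsto_at_left_within_if_finitely_many_upcrossings:
  fixes \<phi> :: "real \<Rightarrow> real"
  assumes "\<forall>a\<in>\<rat>. \<forall>b\<in>\<rat>. a < b \<longrightarrow> (\<exists>N. \<forall>l. \<not> upcrossing_chain \<phi> D a b N l)"
    and "at t within (D \<inter> {..<t}) \<noteq> bot"
    and "eventually (\<lambda>s. \<bar>\<phi> s\<bar> \<le> B) (at t within (D \<inter> {..<t}))"
  shows "\<exists>l. (\<phi> \<longlongrightarrow> l) (at t within (D \<inter> {..<t}))"
  using assms(2,3) by (rule tendsto_of_no_oscillation)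
    (use assms(1) upcrossing_chain_if_oscillating_at_left in blast)

locale dense_grid =
  fixes D :: "real set" and t0 :: real
  assumes dense_grid: "\<And>x y. 0 \<le> x \<Longrightarrow> x < y \<Longrightarrow> y \<le> t0 \<Longrightarrow> \<exists>q\<in>D. x < q \<and> q < y"
begin

lemma at_right_within_grid_nontrivial:
  assumes "0 \<le> u" "u < t0"
  shows "at u within (D \<inter> {u<..}) \<noteq> bot"
  unfolding trivial_limit_within islimpt_approachable_real not_not
proof (intro allI impI)
  fix e :: real assume "0 < e"
  obtain q where "q \<in> D" "u < q" "q < min (u + e) t0"
    using dense_grid[of u "min (u + e) t0"] assms \<open>0 < e\<close> by auto
  then show "\<exists>x'\<in>D \<inter> {u<..}. x' \<noteq> u \<and> \<bar>x' - u\<bar> < e" by (intro bexI[of _ q]) auto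
qed

lemma at_left_within_grid_nontrivial:
  assumes "0 < u" "u \<le> t0"
  shows "at u within (D \<inter> {..<u}) \<noteq> bot"
  unfolding trivial_limit_within islimpt_approachable_real not_not
proof (intro allI impI)
  fix e :: real assume "0 < e"
  obtain q where "q \<in> D" "max 0 (u - e) < q" "q < u"
    using dense_grid[of "max 0 (u - e)" u] assms \<open>0 < e\<close> by auto
  then show "\<exists>x'\<in>D \<inter> {..<u}. x' \<noteq> u \<and> \<bar>x' - u\<bar> < e" by (intro bexI[of _ q]) auto
qed

context
  fixes \<phi> g :: "real \<Rightarrow> real"
  assumes right_limit: "\<And>t. 0 \<le> t \<Longrightarrow> t < t0 \<Longrightarrow> (\<phi> \<longlongrightarrow> g t) (at t within (D \<inter> {t<..}))"
begin

lemma dist_right_limit_le: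
  assumes "0 \<le> u" "u < v" "u < t0" and close: "\<And>s. s \<in> D \<Longrightarrow> u < s \<Longrightarrow> s < v \<Longrightarrow> dist (\<phi> s) c < e"
  shows "dist (g u) c \<le> e"
proof (rule tendsto_upperbound[OF tendsto_dist[OF right_limit tendsto_const]])
  show "eventually (\<lambda>s. dist (\<phi> s) c \<le> e) (at u within (D \<inter> {u<..}))"
    unfolding eventually_at using assms
    by (intro exI[of _ "v - u"]) (auto simp: dist_real_def intro: less_imp_le close)
qed (use assms at_right_within_grid_nontrivial in auto)

lemma right_limit_continuous_from_right:
  assumes "0 \<le> t" "t < t0"
  shows "(g \<longlongrightarrow> g t) (at_right t)"
  unfolding tendsto_iff
proof (intro allI impI)
  fix e :: real assume "0 < e"
  have "eventually (\<lambda>s. dist (\<phi> s) (g t) < e / 2) (at t within (D \<inter> {t<..}))"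
    by (rule tendstoD[OF right_limit[OF assms]]) (use \<open>0 < e\<close> in simp)
  then obtain d where d: "0 < d" "\<And>s. s \<in> D \<Longrightarrow> t < s \<Longrightarrow> s < t + d \<Longrightarrow> dist (\<phi> s) (g t) < e / 2"
    unfolding eventually_at by (auto simp: dist_real_def)
  have "dist (g u) (g t) < e" if "t < u" "u < min (t + d) t0" for u
    using dist_right_limit_le[of u "t + d" "g t" "e / 2"] d that assms \<open>0 < e\<close> by auto
  moreover have "t < min (t + d) t0" using d assms by simp
  ultimately show "eventually (\<lambda>u. dist (g u) (g t) < e) (at_right t)"
    unfolding eventually_at_right_field by blast
qed

lemma right_limit_tendsto_at_left:
  assumes left_limit: "(\<phi> \<longlongrightarrow> L) (at t within (D \<inter> {..<t}))" and "0 < t" "t \<le> t0"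
  shows "(g \<longlongrightarrow> L) (at_left t)"
  unfolding tendsto_iff
proof (intro allI impI)
  fix e :: real assume "0 < e"
  have "eventually (\<lambda>s. dist (\<phi> s) L < e / 2) (at t within (D \<inter> {..<t}))"
    by (rule tendstoD[OF left_limit]) (use \<open>0 < e\<close> in simp)
  then obtain d where d: "0 < d" "\<And>s. s \<in> D \<Longrightarrow> t - d < s \<Longrightarrow> s < t \<Longrightarrow> dist (\<phi> s) L < e / 2"
    unfolding eventually_at by (auto simp: dist_real_def)
  have "dist (g u) L < e" if "max 0 (t - d) < u" "u < t" for u
    using dist_right_limit_le[of u t L "e / 2"] d that assms \<open>0 < e\<close> by auto
  moreover have "max 0 (t - d) < t" using d assms by simp
  ultimately show "eventually (\<lambda>u. dist (g u) L < e) (at_left t)"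
    unfolding eventually_at_left_field by blast
qed

end

end

section \<open>Integration and measurability\<close>

lemma Fatou_integral_le:
  fixes f :: "nat \<Rightarrow> 'a \<Rightarrow> real"
  assumes f: "\<And>n. integrable M (f n)" and g: "g \<in> borel_measurable M"
    and nonneg: "AE x in M. \<forall>n. 0 \<le> f n x"
    and lim: "AE x in M. (\<lambda>n. f n x) \<longlonglongrightarrow> g x"
    and integral: "\<And>n. (\<integral>x. f n x \<partial>M) = c"
  shows "integrable M g" and "(\<integral>x. g x \<partial>M) \<le> c"
proof -
  have g_nonneg: "AE x in M. 0 \<le> g x"
    using nonneg lim by eventually_elim (auto intro: LIMSEQ_le_const)
  have "0 \<le> (\<integral>x. f 0 x \<partial>M)"
    using nonneg by (intro integral_nonneg_AE) auto
  then have "0 \<le> c" by (simp add: integral)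
  have "(\<integral>\<^sup>+x. ennreal (g x) \<partial>M) = (\<integral>\<^sup>+x. liminf (\<lambda>n. ennreal (f n x)) \<partial>M)"
    using lim by (intro nn_integral_cong_AE) (auto elim!: eventually_mono intro!: lim_imp_Liminf[symmetric])
  also have "\<dots> \<le> liminf (\<lambda>n. \<integral>\<^sup>+x. ennreal (f n x) \<partial>M)"
    using f by (intro nn_integral_liminf) auto
  also have "(\<lambda>n. \<integral>\<^sup>+x. ennreal (f n x) \<partial>M) = (\<lambda>n. ennreal c)"
  proof
    fix n
    have "AE x in M. 0 \<le> f n x" using nonneg by eventually_elim simp
    then show "(\<integral>\<^sup>+x. ennreal (f n x) \<partial>M) = ennreal c"
      using nn_integral_eq_integral[OF f] integral by simp
  qed
  finally have le: "(\<integral>\<^sup>+x. ennreal (g x) \<partial>M) \<le> ennreal c"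
    by (simp add: Liminf_const)
  have "(\<integral>\<^sup>+x. ennreal (norm (g x)) \<partial>M) = (\<integral>\<^sup>+x. ennreal (g x) \<partial>M)"
    using g_nonneg by (intro nn_integral_cong_AE) (auto elim!: eventually_mono)
  then show int_g: "integrable M g"
    using g le by (intro integrableI_bounded) (auto simp: top_unique intro: le_less_trans)
  show "(\<integral>x. g x \<partial>M) \<le> c"
    using le \<open>0 \<le> c\<close> by (simp add: nn_integral_eq_integral[OF int_g g_nonneg])
qed

lemma AE_nn_set_integral_cong:
  fixes G H :: "'b \<Rightarrow> 'a \<Rightarrow> ennreal"
  assumes "sigma_finite_measure N" "sigma_finite_measure M" and [measurable]: "S \<in> sets N"
    and [measurable]: "(\<lambda>p. G (fst p) (snd p)) \<in> borel_measurable (N \<Otimes>\<^sub>M M)"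
      "(\<lambda>p. H (fst p) (snd p)) \<in> borel_measurable (N \<Otimes>\<^sub>M M)"
    and eq: "\<And>s. s \<in> S \<Longrightarrow> AE \<omega> in M. G s \<omega> = H s \<omega>"
  shows "AE \<omega> in M. (\<integral>\<^sup>+s\<in>S. G s \<omega> \<partial>N) = (\<integral>\<^sup>+s\<in>S. H s \<omega> \<partial>N)"
proof -
  interpret pair_sigma_finite N M using assms(1,2) by (rule pair_sigma_finite.intro)
  have "AE \<omega> in M. s \<in> S \<longrightarrow> G s \<omega> = H s \<omega>" for s
    using eq[of s] by (cases "s \<in> S") auto
  then have "AE s in N. AE \<omega> in M. s \<in> S \<longrightarrow> G s \<omega> = H s \<omega>"
    by simp
  then have "AE \<omega> in M. AE s in N. s \<in> S \<longrightarrow> G s \<omega> = H s \<omega>"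
    by (subst (asm) AE_commute) measurable
  then show ?thesis
    by eventually_elim (auto intro!: nn_integral_cong_AE elim!: eventually_mono simp: indicator_def)
qed

lemma borel_measurable_nn_set_integral:
  fixes G :: "'b \<Rightarrow> 'a \<Rightarrow> ennreal"
  assumes "sigma_finite_measure N" "S \<in> sets N"
    and "(\<lambda>p. G (fst p) (snd p)) \<in> borel_measurable (N \<Otimes>\<^sub>M M)"
  shows "(\<lambda>\<omega>. \<integral>\<^sup>+s\<in>S. G s \<omega> \<partial>N) \<in> borel_measurable M"
proof -
  have "(\<lambda>(\<omega>, s). G s \<omega> * indicator S s) \<in> borel_measurable (M \<Otimes>\<^sub>M N)"
    using assms(2,3) by (subst measurable_pair_swap_iff) (simp add: case_prod_beta')
  then show ?thesis by (rule sigma_finite_measure.borel_measurable_nn_integral[OF assms(1)])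
qed

lemma borel_measurable_h_EZ [measurable]:
  assumes [measurable]: "f \<in> borel_measurable N" "g \<in> borel_measurable N"
  shows "(\<lambda>x. h_EZ \<theta> (f x) (g x)) \<in> borel_measurable N"
  unfolding h_EZ_def by measurable

definition dyadic_above :: "nat \<Rightarrow> real \<Rightarrow> real" where
  "dyadic_above n s = (real_of_int \<lfloor>s * 2 ^ n\<rfloor> + 1) / 2 ^ n"

lemma dyadic_above_gt: "s < dyadic_above n s"
  unfolding dyadic_above_def by (simp add: less_divide_eq)

lemma LIMSEQ_dyadic_above: "(\<lambda>n. dyadic_above n s) \<longlonglongrightarrow> s"
proof -
  have upper: "dyadic_above n s \<le> s + (1 / 2) ^ n" for n
    unfolding dyadic_above_def by (simp add: divide_le_eq field_simps)
  have lim: "(\<lambda>n. s + (1 / 2 :: real) ^ n) \<longlonglongrightarrow> s"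
    using tendsto_add[OF tendsto_const LIMSEQ_realpow_zero[of "1 / 2"]] by simp
  show ?thesis
    by (rule tendsto_sandwich[OF always_eventually always_eventually tendsto_const lim])
      (auto intro: less_imp_le dyadic_above_gt upper)
qed

lemma tendsto_min_dyadic_above:
  fixes f :: "real \<Rightarrow> real"
  assumes right_cont: "(f \<longlongrightarrow> f s) (at_right s)" and "s \<le> T"
  shows "(\<lambda>n. f (min T (dyadic_above n s))) \<longlonglongrightarrow> f s"
proof (cases "s = T")
  case False
  then have gt: "s < min T (dyadic_above n s)" for n
    using \<open>s \<le> T\<close> dyadic_above_gt[of s n] by simp
  have "(\<lambda>n. min T (dyadic_above n s)) \<longlonglongrightarrow> min T s"
    by (intro tendsto_min tendsto_const LIMSEQ_dyadic_above)
  then have "filterlim (\<lambda>n. min T (dyadic_above n s)) (at_right s) sequentially"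
    using gt \<open>s \<le> T\<close>
    by (auto simp: filterlim_at min_absorb2 less_imp_neq[symmetric] intro!: always_eventually)
  from filterlim_compose[OF right_cont this] show ?thesis .
qed (use dyadic_above_gt in \<open>simp add: less_imp_le min_absorb1\<close>)

context std_filtered_space
begin

lemma measurable_ident_M_F: "0 \<le> t \<Longrightarrow> (\<lambda>\<omega>. \<omega>) \<in> M \<rightarrow>\<^sub>M F t"
  using sets_F_subset[of t] sets.sets_into_space[of _ "F t"]
  by (auto simp: measurable_def space_F Int_absorb2)

lemma prog_measurable_imp_adapted:
  assumes "prog_measurable M F X" "0 \<le> t"
  shows "X t \<in> borel_measurable (F t)"
proof -
  have "(\<lambda>\<omega>. (t, \<omega>)) \<in> F t \<rightarrow>\<^sub>M restrict_space borel {0..t} \<Otimes>\<^sub>M F t"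
    using assms(2) by (intro measurable_Pair measurable_const) (auto simp: space_restrict_space)
  from measurable_compose[OF this] assms(1) show ?thesis
    unfolding prog_measurable_def using assms(2) by auto
qed

lemma prog_measurable_imp_borel_measurable_pair:
  assumes prog: "prog_measurable M F X"
  shows "(\<lambda>p. X (max 0 (fst p)) (snd p)) \<in> borel_measurable (lborel \<Otimes>\<^sub>M M)"
proof -
  define Z where "Z n p = X (min (real n) (max 0 (fst p))) (snd p)" for n :: nat and p
  have Z_measurable: "Z n \<in> borel_measurable (lborel \<Otimes>\<^sub>M M)" for n
  proof -
    have "(\<lambda>s. min (real n) (max 0 s)) \<in> lborel \<rightarrow>\<^sub>M restrict_space borel {0..real n}"
      by (intro measurable_restrict_space2) auto
    then have "(\<lambda>p. (min (real n) (max 0 (fst p)), snd p))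
        \<in> lborel \<Otimes>\<^sub>M M \<rightarrow>\<^sub>M restrict_space borel {0..real n} \<Otimes>\<^sub>M F (real n)"
      by (rule measurable_Pair[OF measurable_compose[OF measurable_fst]
            measurable_compose[OF measurable_snd measurable_ident_M_F]]) simp
    moreover have "(\<lambda>(s, \<omega>). X s \<omega>) \<in> borel_measurable (restrict_space borel {0..real n} \<Otimes>\<^sub>M F (real n))"
      using prog by (simp add: prog_measurable_def)
    ultimately show ?thesis
      unfolding Z_def[abs_def] using measurable_compose by fastforce
  qed
  have Z_limit: "(\<lambda>n. Z n p) \<longlonglongrightarrow> X (max 0 (fst p)) (snd p)" for p
  proof -
    obtain N :: nat where N: "max 0 (fst p) \<le> real N" using real_arch_simple by blast
    have "Z n p = X (max 0 (fst p)) (snd p)" if "N \<le> n" for n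
      using N that by (simp add: Z_def min_absorb2 order_trans)
    then show ?thesis by (intro tendsto_eventually) (auto simp: eventually_sequentially)
  qed
  show ?thesis by (rule borel_measurable_LIMSEQ_real[OF Z_limit Z_measurable])
qed

lemma measurable_dyadic_approximation:
  assumes adapted: "\<And>t. 0 \<le> t \<Longrightarrow> X t \<in> borel_measurable (F t)" and "0 \<le> T"
  shows "(\<lambda>p. X (min T (max 0 (dyadic_above n (fst p)))) (snd p))
           \<in> borel_measurable (restrict_space borel {0..T} \<Otimes>\<^sub>M F T)"
proof -
  let ?P = "restrict_space borel {0..T} \<Otimes>\<^sub>M F T"
  have "X (min T (max 0 ((real_of_int k + 1) / 2 ^ n))) \<in> borel_measurable (F T)" for k
    using \<open>0 \<le> T\<close> by (intro measurable_F_mono[OF _ _ adapted]) auto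
  then have "(\<lambda>p. X (min T (max 0 ((real_of_int k + 1) / 2 ^ n))) (snd p)) \<in> borel_measurable ?P"
    for k
    by measurable
  moreover have "(\<lambda>p. \<lfloor>fst p * 2 ^ n\<rfloor>) \<in> ?P \<rightarrow>\<^sub>M count_space UNIV"
    by (intro measurable_compose[OF _ measurable_real_floor] measurable_compose[OF measurable_fst]
        measurable_restrict_space1) simp
  ultimately show ?thesis
    unfolding dyadic_above_def by (rule measurable_compose_countable)
qed

lemma prog_measurable_if_right_continuous:
  assumes adapted: "\<And>t. 0 \<le> t \<Longrightarrow> X t \<in> borel_measurable (F t)"
    and right_cont: "\<And>\<omega> t. \<omega> \<in> space M \<Longrightarrow> 0 \<le> t \<Longrightarrow> continuous (at_right t) (\<lambda>s. X s \<omega>)"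
  shows "prog_measurable M F X"
  unfolding prog_measurable_def
proof (intro allI impI)
  fix T :: real
  assume "0 \<le> T"
  let ?P = "restrict_space borel {0..T} \<Otimes>\<^sub>M F T"
  define Xn where "Xn n p = X (min T (max 0 (dyadic_above n (fst p)))) (snd p)" for n p
  have Xn_measurable: "Xn n \<in> borel_measurable ?P" for n
    unfolding Xn_def[abs_def] using adapted \<open>0 \<le> T\<close> by (rule measurable_dyadic_approximation)
  have Xn_limit: "(\<lambda>n. Xn n p) \<longlonglongrightarrow> (\<lambda>(s, \<omega>). X s \<omega>) p" if p_space: "p \<in> space ?P" for p
  proof -
    obtain s \<omega> where p: "p = (s, \<omega>)" "0 \<le> s" "s \<le> T" "\<omega> \<in> space M"
      using p_space space_F[OF \<open>0 \<le> T\<close>] by (cases p) (auto simp: space_pair_measure)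
    have "Xn n p = X (min T (dyadic_above n s)) \<omega>" for n
      using dyadic_above_gt[of s n] p by (simp add: Xn_def)
    then show ?thesis
      using tendsto_min_dyadic_above[of "\<lambda>r. X r \<omega>", OF _ p(3)] right_cont[OF p(4,2)]
      by (simp add: p(1) continuous_within)
  qed
  show "(\<lambda>(s, \<omega>). X s \<omega>) \<in> borel_measurable ?P"
    by (rule borel_measurable_LIMSEQ_real[OF Xn_limit Xn_measurable])
qed

end

section \<open>Restricting a utility process to an event\<close>

definition utility_integral ::
    "real \<Rightarrow> (real \<Rightarrow> 'a \<Rightarrow> real) \<Rightarrow> (real \<Rightarrow> 'a \<Rightarrow> real) \<Rightarrow> real \<Rightarrow> 'a \<Rightarrow> ennreal" where
  "utility_integral \<theta> U W t \<omega> = (\<integral>\<^sup>+s\<in>{t..}. ennreal (h_EZ \<theta> (U s \<omega>) (W s \<omega>)) \<partial>lborel)"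

lemma utility_process_iff:
  "utility_process M F (h_EZ \<theta>) U W \<longleftrightarrow>
     nonneg_process M W \<and> cadlag M W \<and> prog_measurable M F W \<and>
     (\<integral>\<^sup>+\<omega>. utility_integral \<theta> U W 0 \<omega> \<partial>M) < \<infinity> \<and>
     (\<forall>t\<ge>0. AE \<omega> in M. W t \<omega> = real_cond_exp M (F t) (\<lambda>\<omega>. enn2real (utility_integral \<theta> U W t \<omega>)) \<omega>)"
  by (simp add: utility_process_def utility_integral_def)

lemma utility_integral_antimono: "s \<le> t \<Longrightarrow> utility_integral \<theta> U W t \<omega> \<le> utility_integral \<theta> U W s \<omega>"
  unfolding utility_integral_def by (intro nn_integral_mono) (auto simp: indicator_def)

lemma utility_integral_clamp:
  "0 \<le> t \<Longrightarrow> utility_integral \<theta> U W t \<omega> =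
     (\<integral>\<^sup>+s\<in>{t..}. ennreal (h_EZ \<theta> (U (max 0 s) \<omega>) (W (max 0 s) \<omega>)) \<partial>lborel)"
  unfolding utility_integral_def by (intro nn_integral_cong) (auto simp: indicator_def)

lemma (in std_filtered_space) borel_measurable_utility_integral:
  assumes "prog_measurable M F U" "prog_measurable M F W" and "0 \<le> t"
  shows "utility_integral \<theta> U W t \<in> borel_measurable M"
proof -
  have [measurable]: "(\<lambda>p. U (max 0 (fst p)) (snd p)) \<in> borel_measurable (lborel \<Otimes>\<^sub>M M)"
    "(\<lambda>p. W (max 0 (fst p)) (snd p)) \<in> borel_measurable (lborel \<Otimes>\<^sub>M M)"
    using assms(1,2) by (auto intro: prog_measurable_imp_borel_measurable_pair)
  show ?thesis
    unfolding utility_integral_clamp[OF \<open>0 \<le> t\<close>, abs_def]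
    by (rule borel_measurable_nn_set_integral) (auto intro: lborel.sigma_finite_measure_axioms)
qed

locale restricted_utility = std_filtered_space M F for M :: "'a measure" and F +
  fixes \<theta> t0 :: real and U W Ut :: "real \<Rightarrow> 'a \<Rightarrow> real" and A :: "'a set"
  assumes U_prog: "prog_measurable M F U"
    and W_utility: "utility_process M F (h_EZ \<theta>) U W"
    and t0: "0 \<le> t0"
    and U_before_t0: "\<forall>t. 0 \<le> t \<and> t < t0 \<longrightarrow> (\<forall>\<omega>\<in>space M. U t \<omega> = 0)"
    and A: "A \<in> sets (F t0)"
    and Ut_prog: "prog_measurable M F Ut"
    and Ut_eq: "\<forall>t\<ge>0. AE \<omega> in M. Ut t \<omega> = real_cond_exp M (F t) (indicator A) \<omega> * U t \<omega>"
begin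

abbreviation "UI \<equiv> utility_integral \<theta> U W"

lemma W_nonneg: "0 \<le> t \<Longrightarrow> \<omega> \<in> space M \<Longrightarrow> 0 \<le> W t \<omega>"
  using W_utility by (auto simp: utility_process_def nonneg_process_def)

lemma W_prog: "prog_measurable M F W"
  using W_utility by (simp add: utility_process_def)

lemma W_right_continuous: "\<omega> \<in> space M \<Longrightarrow> 0 \<le> t \<Longrightarrow> ((\<lambda>s. W s \<omega>) \<longlongrightarrow> W t \<omega>) (at_right t)"
  using W_utility unfolding utility_process_def cadlag_def continuous_within by blast

lemma W_left_limit: "\<omega> \<in> space M \<Longrightarrow> 0 < t \<Longrightarrow> \<exists>l. ((\<lambda>s. W s \<omega>) \<longlongrightarrow> l) (at_left t)"
  using W_utility unfolding utility_process_def cadlag_def by (meson less_imp_le)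

lemma W_eq_cond_exp:
  "0 \<le> t \<Longrightarrow> AE \<omega> in M. W t \<omega> = real_cond_exp M (F t) (\<lambda>\<omega>. enn2real (UI t \<omega>)) \<omega>"
  using W_utility by (simp add: utility_process_iff)

lemma W_adapted: "0 \<le> t \<Longrightarrow> W t \<in> borel_measurable (F t)"
  using W_prog by (rule prog_measurable_imp_adapted)

lemma W_measurable: "0 \<le> t \<Longrightarrow> W t \<in> borel_measurable M"
  using W_adapted measurable_F_imp_M by blast

lemma A_in_F: "t0 \<le> t \<Longrightarrow> A \<in> sets (F t)"
  using A t0 sets_F_mono by blast

lemma A_in_M: "A \<in> sets M"
  using A t0 by (rule sets_F_imp_M[rotated])

lemma integrable_UI:
  assumes "0 \<le> t"
  shows "integrable M (\<lambda>\<omega>. enn2real (UI t \<omega>))"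
proof (rule integrableI_bounded)
  show "(\<lambda>\<omega>. enn2real (UI t \<omega>)) \<in> borel_measurable M"
    using borel_measurable_utility_integral[OF U_prog W_prog assms] by measurable
  have "(\<integral>\<^sup>+\<omega>. ennreal (norm (enn2real (UI t \<omega>))) \<partial>M) \<le> (\<integral>\<^sup>+\<omega>. UI 0 \<omega> \<partial>M)"
    using utility_integral_antimono[OF assms]
    by (intro nn_integral_mono) (auto simp: ennreal_enn2real_if)
  also have "\<dots> < \<infinity>"
    using W_utility by (simp add: utility_process_iff)
  finally show "(\<integral>\<^sup>+\<omega>. ennreal (norm (enn2real (UI t \<omega>))) \<partial>M) < \<infinity>" .
qed

lemma integrable_W:
  assumes "0 \<le> t"
  shows "integrable M (W t)"
proof (rule integrable_cong_AE_imp[OF _ W_measurable[OF assms]])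
  interpret sigma_finite_subalgebra M "F t" using assms by (rule sigma_finite_subalgebra_F)
  show "integrable M (real_cond_exp M (F t) (\<lambda>\<omega>. enn2real (UI t \<omega>)))"
    using integrable_UI[OF assms] by (rule real_cond_exp_int(1))
  show "AE \<omega> in M. real_cond_exp M (F t) (\<lambda>\<omega>. enn2real (UI t \<omega>)) \<omega> = W t \<omega>"
    using W_eq_cond_exp[OF assms] by (auto elim: eventually_mono)
qed

lemma UI_before_t0:
  assumes "0 \<le> s" "s \<le> t0" "\<omega> \<in> space M"
  shows "UI s \<omega> = UI t0 \<omega>"
  unfolding utility_integral_def
  using assms U_before_t0 by (intro nn_integral_cong) (auto simp: indicator_def h_EZ_def)

lemma W_martingale:
  assumes "0 \<le> s" "s \<le> t0"
  shows "AE \<omega> in M. W s \<omega> = real_cond_exp M (F s) (W t0) \<omega>"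
proof -
  interpret sigma_finite_subalgebra M "F s" using assms(1) by (rule sigma_finite_subalgebra_F)
  let ?Z = "\<lambda>t \<omega>. enn2real (UI t \<omega>)"
  have Z_measurable: "?Z t \<in> borel_measurable M" if "0 \<le> t" for t
    using borel_measurable_utility_integral[OF U_prog W_prog that] by measurable
  have "AE \<omega> in M. ?Z s \<omega> = ?Z t0 \<omega>"
    using UI_before_t0[OF assms] by (intro AE_I2) simp
  then have "AE \<omega> in M. real_cond_exp M (F s) (?Z s) \<omega> = real_cond_exp M (F s) (?Z t0) \<omega>"
    using assms t0 by (intro real_cond_exp_cong) (auto intro: Z_measurable)
  moreover have "AE \<omega> in M. real_cond_exp M (F s) (real_cond_exp M (F t0) (?Z t0)) \<omega>
      = real_cond_exp M (F s) (?Z t0) \<omega>"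
    by (rule real_cond_exp_nested_subalg[OF subalgebra_F[OF t0] subalgebra_F_F[OF assms] integrable_UI[OF t0]])
  moreover have "AE \<omega> in M. real_cond_exp M (F s) (real_cond_exp M (F t0) (?Z t0)) \<omega>
      = real_cond_exp M (F s) (W t0) \<omega>"
    using W_eq_cond_exp[OF t0] Z_measurable[OF t0] W_measurable[OF t0] t0
    by (intro real_cond_exp_cong) (auto elim: eventually_mono)
  ultimately show ?thesis
    using W_eq_cond_exp[OF assms(1)] by eventually_elim simp
qed

definition W_A :: "'a \<Rightarrow> real" where
  "W_A \<omega> = indicator A \<omega> * W t0 \<omega>"

lemma integrable_W_A: "integrable M W_A"
  using integrable_mult_indicator[OF A_in_M integrable_W[OF t0]] by (simp add: W_A_def[abs_def])

lemma W_A_nonneg: "\<omega> \<in> space M \<Longrightarrow> 0 \<le> W_A \<omega>"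
  using W_nonneg[OF t0] by (simp add: W_A_def)

lemma W_A_le: "\<omega> \<in> space M \<Longrightarrow> W_A \<omega> \<le> W t0 \<omega>"
  using W_nonneg[OF t0] by (simp add: W_A_def indicator_def)

abbreviation "V \<equiv> cond_exp_process W_A"

definition grid :: "real set" where
  "grid = {q \<in> \<rat>. 0 \<le> q \<and> q < t0}"

lemma countable_grid: "countable grid"
  unfolding grid_def by (rule countable_subset[OF _ countable_rat]) auto

lemma grid_nonneg: "grid \<subseteq> {0..}"
  by (auto simp: grid_def)

sublocale grid: dense_grid grid t0
proof
  fix x y :: real
  assume "0 \<le> x" "x < y" "y \<le> t0"
  then show "\<exists>q\<in>grid. x < q \<and> q < y"
    using Rats_dense_in_real[of x y] by (force simp: grid_def)
qed

lemma V_between_0_W: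
  assumes "0 \<le> s" "s \<le> t0"
  shows "AE \<omega> in M. 0 \<le> V s \<omega> \<and> V s \<omega> \<le> W s \<omega>"
proof -
  interpret sigma_finite_subalgebra M "F s" using assms(1) by (rule sigma_finite_subalgebra_F)
  have "AE \<omega> in M. 0 \<le> V s \<omega>"
    using integrable_W_A W_A_nonneg by (intro cond_exp_process_nonneg) auto
  moreover have "AE \<omega> in M. real_cond_exp M (F s) W_A \<omega> \<le> real_cond_exp M (F s) (W t0) \<omega>"
    using W_A_le by (intro real_cond_exp_mono integrable_W_A integrable_W t0 AE_I2)
  ultimately show ?thesis
    using W_martingale[OF assms] by eventually_elim (use assms(1) in \<open>simp add: cond_exp_process_def\<close>)
qed

definition regular :: "'a \<Rightarrow> bool" where
  "regular \<omega> \<longleftrightarrow> (\<forall>s\<in>grid. 0 \<le> V s \<omega> \<and> V s \<omega> \<le> W s \<omega>) \<and>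
     (\<forall>a\<in>\<rat>. \<forall>b\<in>\<rat>. a < b \<longrightarrow> (\<exists>N. \<forall>l. \<not> upcrossing_chain (\<lambda>s. V s \<omega>) grid a b N l))"

lemma AE_regular: "AE \<omega> in M. regular \<omega>"
proof -
  have "AE \<omega> in M. \<forall>s\<in>grid. 0 \<le> V s \<omega> \<and> V s \<omega> \<le> W s \<omega>"
    using V_between_0_W by (subst AE_ball_countable[OF countable_grid]) (auto simp: grid_def)
  moreover have "AE \<omega> in M. \<forall>a\<in>\<rat>. \<forall>b\<in>\<rat>. a < b \<longrightarrow>
      (\<exists>N. \<forall>l. \<not> upcrossing_chain (\<lambda>s. V s \<omega>) grid a b N l)"
    using integrable_W_A W_A_nonneg
    by (intro AE_finitely_many_upcrossings_Rats countable_grid grid_nonneg) auto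
  ultimately show ?thesis by (auto simp: regular_def)
qed

lemma regular_in_F: "0 \<le> t \<Longrightarrow> {\<omega>\<in>space M. regular \<omega>} \<in> sets (F t)"
  using AE_regular by (rule AE_set_in_F)

definition grid_right_limit :: "'a \<Rightarrow> real \<Rightarrow> real" where
  "grid_right_limit \<omega> t = Lim (at t within (grid \<inter> {t<..})) (\<lambda>s. V s \<omega>)"

lemma tendsto_grid_right_limit:
  assumes \<omega>: "\<omega> \<in> space M" "regular \<omega>" and t: "0 \<le> t" "t < t0"
  shows "((\<lambda>s. V s \<omega>) \<longlongrightarrow> grid_right_limit \<omega> t) (at t within (grid \<inter> {t<..}))"
proof -
  have "eventually (\<lambda>s. W s \<omega> < W t \<omega> + 1) (at_right t)"
    using W_right_continuous[OF \<omega>(1) t(1)] by (rule order_tendstoD) simp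
  then have "eventually (\<lambda>s. W s \<omega> < W t \<omega> + 1 \<and> s \<in> grid) (at t within (grid \<inter> {t<..}))"
    by (auto simp: eventually_at_filter elim: filter_leD[OF at_le, rotated] eventually_mono)
  then have "eventually (\<lambda>s. \<bar>V s \<omega>\<bar> \<le> W t \<omega> + 1) (at t within (grid \<inter> {t<..}))"
    by eventually_elim (use \<omega>(2) in \<open>auto simp: regular_def\<close>)
  with \<omega>(2) grid.at_right_within_grid_nontrivial[OF t]
  obtain l where l: "((\<lambda>s. V s \<omega>) \<longlongrightarrow> l) (at t within (grid \<inter> {t<..}))"
    using tendsto_at_right_within_if_finitely_many_upcrossings unfolding regular_def by blast
  moreover have "grid_right_limit \<omega> t = l"
    unfolding grid_right_limit_def by (rule tendsto_Lim[OF grid.at_right_within_grid_nontrivial[OF t] l])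
  ultimately show ?thesis by simp
qed

lemma convergent_at_left_within_grid:
  assumes \<omega>: "\<omega> \<in> space M" "regular \<omega>" and t: "0 < t" "t \<le> t0"
  shows "\<exists>L. ((\<lambda>s. V s \<omega>) \<longlongrightarrow> L) (at t within (grid \<inter> {..<t}))"
proof -
  obtain l where "((\<lambda>s. W s \<omega>) \<longlongrightarrow> l) (at_left t)"
    using W_left_limit[OF \<omega>(1) t(1)] by blast
  then have "eventually (\<lambda>s. W s \<omega> < l + 1) (at_left t)"
    by (rule order_tendstoD) simp
  then have "eventually (\<lambda>s. W s \<omega> < l + 1 \<and> s \<in> grid) (at t within (grid \<inter> {..<t}))"
    by (auto simp: eventually_at_filter elim: filter_leD[OF at_le, rotated] eventually_mono)
  then have "eventually (\<lambda>s. \<bar>V s \<omega>\<bar> \<le> l + 1) (at t within (grid \<inter> {..<t}))"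
    by eventually_elim (use \<omega>(2) in \<open>auto simp: regular_def\<close>)
  with \<omega>(2) grid.at_left_within_grid_nontrivial[OF t] show ?thesis
    using tendsto_at_left_within_if_finitely_many_upcrossings unfolding regular_def by blast
qed

lemma grid_right_limit_nonneg:
  assumes \<omega>: "\<omega> \<in> space M" "regular \<omega>" and t: "0 \<le> t" "t < t0"
  shows "0 \<le> grid_right_limit \<omega> t"
proof (rule tendsto_lowerbound[OF tendsto_grid_right_limit[OF assms]])
  show "eventually (\<lambda>s. 0 \<le> V s \<omega>) (at t within (grid \<inter> {t<..}))"
    using \<omega>(2) by (auto simp: eventually_at_filter regular_def)
qed (rule grid.at_right_within_grid_nontrivial[OF t])

text \<open>The paper's W-tilde, a cadlag version of \<open>E[1\<^sub>A W (max t t0) | F t]\<close>.\<close>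
definition W_tilde :: "real \<Rightarrow> 'a \<Rightarrow> real" where
  "W_tilde t \<omega> = (if t < t0 then (if regular \<omega> then grid_right_limit \<omega> t else 0)
                   else indicator A \<omega> * W t \<omega>)"

lemma W_tilde_nonneg: "0 \<le> t \<Longrightarrow> \<omega> \<in> space M \<Longrightarrow> 0 \<le> W_tilde t \<omega>"
  using grid_right_limit_nonneg W_nonneg by (auto simp: W_tilde_def)

lemma W_tilde_right_continuous:
  assumes \<omega>: "\<omega> \<in> space M" and t: "0 \<le> t"
  shows "((\<lambda>s. W_tilde s \<omega>) \<longlongrightarrow> W_tilde t \<omega>) (at_right t)"
proof (cases "t < t0")
  case True
  have "eventually (\<lambda>s. (if regular \<omega> then grid_right_limit \<omega> s else 0) = W_tilde s \<omega>) (at_right t)"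
    using True by (auto simp: W_tilde_def eventually_at_right_field intro!: exI[of _ t0])
  moreover have "((\<lambda>s. if regular \<omega> then grid_right_limit \<omega> s else 0) \<longlongrightarrow> W_tilde t \<omega>) (at_right t)"
    using grid.right_limit_continuous_from_right[OF tendsto_grid_right_limit[OF \<omega>] t True] True
    by (simp add: W_tilde_def)
  ultimately show ?thesis by (rule Lim_transform_eventually[rotated])
next
  case False
  have "eventually (\<lambda>s. indicator A \<omega> * W s \<omega> = W_tilde s \<omega>) (at_right t)"
    using eventually_at_right_less[of t] by eventually_elim (use False in \<open>auto simp: W_tilde_def\<close>)
  moreover have "((\<lambda>s. indicator A \<omega> * W s \<omega>) \<longlongrightarrow> W_tilde t \<omega>) (at_right t)"
    using tendsto_mult_left[OF W_right_continuous[OF \<omega> t]] False by (simp add: W_tilde_def)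
  ultimately show ?thesis by (rule Lim_transform_eventually[rotated])
qed

lemma W_tilde_left_limit:
  assumes \<omega>: "\<omega> \<in> space M" and t: "0 < t"
  shows "\<exists>l. ((\<lambda>s. W_tilde s \<omega>) \<longlongrightarrow> l) (at_left t)"
proof (cases "t \<le> t0")
  case True
  have ev: "eventually (\<lambda>s. (if regular \<omega> then grid_right_limit \<omega> s else 0) = W_tilde s \<omega>) (at_left t)"
    using True t by (auto simp: W_tilde_def eventually_at_left_field intro!: exI[of _ 0])
  have "\<exists>l. ((\<lambda>s. if regular \<omega> then grid_right_limit \<omega> s else 0) \<longlongrightarrow> l) (at_left t)"
  proof (cases "regular \<omega>")
    case True
    then obtain L where "((\<lambda>s. V s \<omega>) \<longlongrightarrow> L) (at t within (grid \<inter> {..<t}))"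
      using convergent_at_left_within_grid \<omega> t \<open>t \<le> t0\<close> by blast
    from grid.right_limit_tendsto_at_left[OF tendsto_grid_right_limit[OF \<omega> True] this t \<open>t \<le> t0\<close>]
    show ?thesis using True by auto
  qed auto
  then obtain l where "((\<lambda>s. if regular \<omega> then grid_right_limit \<omega> s else 0) \<longlongrightarrow> l) (at_left t)" ..
  from Lim_transform_eventually[OF this ev] show ?thesis ..
next
  case False
  have ev: "eventually (\<lambda>s. indicator A \<omega> * W s \<omega> = W_tilde s \<omega>) (at_left t)"
    using False by (auto simp: W_tilde_def eventually_at_left_field intro!: exI[of _ t0])
  obtain l where "((\<lambda>s. W s \<omega>) \<longlongrightarrow> l) (at_left t)"
    using W_left_limit[OF \<omega> t] by blast
  from Lim_transform_eventually[OF tendsto_mult_left[OF this] ev] show ?thesis ..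
qed

lemma W_tilde_cadlag: "cadlag M W_tilde"
  unfolding cadlag_def continuous_within using W_tilde_right_continuous W_tilde_left_limit by blast

lemma grid_sequence:
  assumes "0 \<le> t" "t < r" "r \<le> t0"
  obtains q where "\<And>n. q n \<in> grid" "\<And>n. t < q n" "\<And>n. q n < r"
    and "filterlim q (at t within (grid \<inter> {t<..})) sequentially"
proof -
  have "\<forall>n. \<exists>q\<in>grid. t < q \<and> q < min r (t + 1 / Suc n)"
    using assms by (intro allI grid.dense_grid) auto
  then obtain q where q: "\<And>n. q n \<in> grid" "\<And>n. t < q n" "\<And>n. q n < min r (t + 1 / Suc n)"
    by metis
  have lim: "(\<lambda>n. t + 1 / Suc n) \<longlonglongrightarrow> t"
    using tendsto_add[OF tendsto_const LIMSEQ_Suc[OF lim_const_over_n[of 1]]] by simp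
  have "q \<longlonglongrightarrow> t"
    by (rule tendsto_sandwich[OF always_eventually always_eventually tendsto_const lim])
      (use q in \<open>auto intro: less_imp_le\<close>)
  then have "filterlim q (at t within (grid \<inter> {t<..})) sequentially"
    using q by (auto simp: filterlim_at less_imp_neq[symmetric] intro!: always_eventually)
  moreover have "q n < r" for n using q(3)[of n] by simp
  ultimately show thesis using q(1,2) that by blast
qed

lemma W_tilde_measurable_F_later:
  assumes t: "0 \<le> t" "t < t0" and r: "t < r"
  shows "W_tilde t \<in> borel_measurable (F r)"
proof -
  obtain q where q: "\<And>n. q n \<in> grid" "\<And>n. t < q n" "\<And>n. q n < min r t0"
    and q_lim: "filterlim q (at t within (grid \<inter> {t<..})) sequentially"
    using grid_sequence[of t "min r t0"] t r by auto
  have regular_F: "{\<omega>\<in>space M. regular \<omega>} \<in> sets (F r)"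
    using regular_in_F t r by simp
  have "V (q n) \<in> borel_measurable (F r)" for n
    using q[of n] t by (intro measurable_F_mono[OF _ _ cond_exp_process_measurable_F]) auto
  then have Vn_measurable: "(\<lambda>\<omega>. if regular \<omega> then V (q n) \<omega> else 0) \<in> borel_measurable (F r)" for n
    by (rule measurable_If[OF _ measurable_const]) (use regular_F t r in \<open>simp_all add: space_F\<close>)
  have Vn_limit: "(\<lambda>n. if regular \<omega> then V (q n) \<omega> else 0) \<longlonglongrightarrow> W_tilde t \<omega>"
    if "\<omega> \<in> space (F r)" for \<omega>
  proof (cases "regular \<omega>")
    case True
    have "\<omega> \<in> space M" using that t r by (simp add: space_F)
    from filterlim_compose[OF tendsto_grid_right_limit[OF this True t] q_lim] show ?thesis
      using True t by (simp add: W_tilde_def)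
  qed (use t in \<open>simp add: W_tilde_def\<close>)
  show ?thesis
    by (rule borel_measurable_LIMSEQ_real[OF Vn_limit Vn_measurable])
qed

lemma W_tilde_adapted:
  assumes "0 \<le> t"
  shows "W_tilde t \<in> borel_measurable (F t)"
proof (cases "t < t0")
  case True
  show ?thesis
    by (rule measurable_F_right_continuous[OF assms W_tilde_measurable_F_later[OF assms True]])
next
  case False
  have [measurable]: "A \<in> sets (F t)" "W t \<in> borel_measurable (F t)"
    using False A_in_F W_adapted[OF assms] by auto
  have "(\<lambda>\<omega>. indicator A \<omega> * W t \<omega>) \<in> borel_measurable (F t)" by measurable
  then show ?thesis
    using False by (simp add: W_tilde_def[abs_def])
qed

lemma W_tilde_prog: "prog_measurable M F W_tilde"
  using W_tilde_adapted W_tilde_right_continuous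
  by (intro prog_measurable_if_right_continuous) (auto simp: continuous_within)

lemma W_tilde_measurable: "0 \<le> t \<Longrightarrow> W_tilde t \<in> borel_measurable M"
  using W_tilde_adapted measurable_F_imp_M by blast

lemma set_integral_W_eq:
  assumes s: "0 \<le> s" "s \<le> t0" and B: "B \<in> sets (F s)"
  shows "(\<integral>\<omega>. indicator B \<omega> * W s \<omega> \<partial>M) = (\<integral>\<omega>. indicator B \<omega> * W t0 \<omega> \<partial>M)"
proof -
  have B_M: "B \<in> sets M" using B s(1) by (rule sets_F_imp_M[rotated])
  have "(\<integral>\<omega>. indicator B \<omega> * W s \<omega> \<partial>M) = (\<integral>\<omega>. indicator B \<omega> * cond_exp_process (W t0) s \<omega> \<partial>M)"
    using W_martingale[OF s] B_M W_measurable[OF s(1)]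
    by (intro integral_cong_AE) (auto simp: cond_exp_process_def s(1) elim!: eventually_mono)
  also have "\<dots> = (\<integral>\<omega>. indicator B \<omega> * W t0 \<omega> \<partial>M)"
    by (rule integral_indicator_cond_exp_process[OF integrable_W[OF t0] s(1) B])
  finally show ?thesis .
qed

lemma set_integral_W_tilde_le:
  assumes t: "0 \<le> t" "t < t0" and B: "B \<in> sets (F t)"
  shows "integrable M (\<lambda>\<omega>. indicator B \<omega> * W_tilde t \<omega>)"
    and "(\<integral>\<omega>. indicator B \<omega> * W_tilde t \<omega> \<partial>M) \<le> (\<integral>\<omega>. indicator B \<omega> * W_A \<omega> \<partial>M)"
proof -
  obtain q where q: "\<And>n. q n \<in> grid" "\<And>n. t < q n" "\<And>n. q n < t0"
    and q_lim: "filterlim q (at t within (grid \<inter> {t<..})) sequentially"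
    using grid_sequence[OF t(1,2) order_refl] by blast
  have B_M: "B \<in> sets M" using B t(1) by (rule sets_F_imp_M[rotated])
  have B_q: "B \<in> sets (F (q n))" for n
    using B sets_F_mono[OF t(1) less_imp_le[OF q(2)]] by blast
  let ?f = "\<lambda>n \<omega>. indicator B \<omega> * V (q n) \<omega>"
  have "integrable M (?f n)" for n
    using integrable_mult_indicator[OF B_M integrable_cond_exp_process[OF integrable_W_A]] by simp
  moreover have "(\<lambda>\<omega>. indicator B \<omega> * W_tilde t \<omega>) \<in> borel_measurable M"
    using B_M W_tilde_measurable[OF t(1)] by measurable
  moreover have "AE \<omega> in M. \<forall>n. 0 \<le> ?f n \<omega>"
    using AE_regular by eventually_elim (use q in \<open>auto simp: regular_def\<close>)
  moreover have "AE \<omega> in M. (\<lambda>n. ?f n \<omega>) \<longlonglongrightarrow> indicator B \<omega> * W_tilde t \<omega>"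
    using AE_regular AE_space
  proof eventually_elim
    case (elim \<omega>)
    from filterlim_compose[OF tendsto_grid_right_limit[OF elim(2,1) t] q_lim]
    show ?case using elim t by (simp add: W_tilde_def tendsto_mult_left)
  qed
  moreover have "(\<integral>\<omega>. ?f n \<omega> \<partial>M) = (\<integral>\<omega>. indicator B \<omega> * W_A \<omega> \<partial>M)" for n
    using integral_indicator_cond_exp_process[OF integrable_W_A _ B_q] t q(2)[of n] by simp
  ultimately show "integrable M (\<lambda>\<omega>. indicator B \<omega> * W_tilde t \<omega>)"
    and "(\<integral>\<omega>. indicator B \<omega> * W_tilde t \<omega> \<partial>M) \<le> (\<integral>\<omega>. indicator B \<omega> * W_A \<omega> \<partial>M)"
    by (rule Fatou_integral_le)+
qed

lemma set_integral_W_minus_V: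
  assumes s: "0 \<le> s" "s \<le> t0" and B: "B \<in> sets (F s)"
  shows "integrable M (\<lambda>\<omega>. indicator B \<omega> * (W s \<omega> - V s \<omega>))"
    and "(\<integral>\<omega>. indicator B \<omega> * (W s \<omega> - V s \<omega>) \<partial>M)
           = (\<integral>\<omega>. indicator B \<omega> * W t0 \<omega> \<partial>M) - (\<integral>\<omega>. indicator B \<omega> * W_A \<omega> \<partial>M)"
proof -
  have B_M: "B \<in> sets M" using B s(1) by (rule sets_F_imp_M[rotated])
  have int: "integrable M (\<lambda>\<omega>. indicator B \<omega> * f \<omega>)" if "integrable M f" for f :: "'a \<Rightarrow> real"
    using integrable_mult_indicator[OF B_M that] by simp
  note int_W = int[OF integrable_W[OF s(1)]] and int_V = int[OF integrable_cond_exp_process[OF integrable_W_A]]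
  show "integrable M (\<lambda>\<omega>. indicator B \<omega> * (W s \<omega> - V s \<omega>))"
    using Bochner_Integration.integrable_diff[OF int_W int_V] by (simp add: right_diff_distrib)
  show "(\<integral>\<omega>. indicator B \<omega> * (W s \<omega> - V s \<omega>) \<partial>M)
      = (\<integral>\<omega>. indicator B \<omega> * W t0 \<omega> \<partial>M) - (\<integral>\<omega>. indicator B \<omega> * W_A \<omega> \<partial>M)"
    using int_W int_V set_integral_W_eq[OF s B] integral_indicator_cond_exp_process[OF integrable_W_A s(1) B]
    by (simp add: right_diff_distrib)
qed

lemma set_integral_W_tilde_ge:
  assumes t: "0 \<le> t" "t < t0" and B: "B \<in> sets (F t)"
  shows "(\<integral>\<omega>. indicator B \<omega> * W_A \<omega> \<partial>M) \<le> (\<integral>\<omega>. indicator B \<omega> * W_tilde t \<omega> \<partial>M)"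
proof -
  obtain q where q: "\<And>n. q n \<in> grid" "\<And>n. t < q n" "\<And>n. q n < t0"
    and q_lim: "filterlim q (at t within (grid \<inter> {t<..})) sequentially"
    using grid_sequence[OF t(1,2) order_refl] by blast
  have "at t within (grid \<inter> {t<..}) \<le> at_right t" by (rule at_le) auto
  with q_lim have q_right: "filterlim q (at_right t) sequentially"
    by (rule filterlim_mono[OF _ _ order_refl])
  have B_M: "B \<in> sets M" using B t(1) by (rule sets_F_imp_M[rotated])
  have q_le: "0 \<le> q n" "q n \<le> t0" "B \<in> sets (F (q n))" for n
    using B sets_F_mono[of t "q n"] t q(2,3)[of n] by auto
  let ?B = "\<lambda>f. \<integral>\<omega>. indicator B \<omega> * f \<omega> \<partial>M"
  let ?f = "\<lambda>n \<omega>. indicator B \<omega> * (W (q n) \<omega> - V (q n) \<omega>)"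
  have "integrable M (?f n)" for n
    using set_integral_W_minus_V(1)[OF q_le] .
  moreover have "(\<lambda>\<omega>. indicator B \<omega> * (W t \<omega> - W_tilde t \<omega>)) \<in> borel_measurable M"
    using B_M W_measurable[OF t(1)] W_tilde_measurable[OF t(1)] by measurable
  moreover have "AE \<omega> in M. \<forall>n. 0 \<le> ?f n \<omega>"
    using AE_regular by eventually_elim (use q in \<open>auto simp: regular_def\<close>)
  moreover have "AE \<omega> in M. (\<lambda>n. ?f n \<omega>) \<longlonglongrightarrow> indicator B \<omega> * (W t \<omega> - W_tilde t \<omega>)"
    using AE_regular AE_space
  proof eventually_elim
    case (elim \<omega>)
    from filterlim_compose[OF tendsto_grid_right_limit[OF elim(2,1) t] q_lim]
      filterlim_compose[OF W_right_continuous[OF elim(2) t(1)] q_right]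
    show ?case using elim t by (simp add: W_tilde_def tendsto_mult_left tendsto_diff)
  qed
  moreover have "(\<integral>\<omega>. ?f n \<omega> \<partial>M) = ?B (W t0) - ?B W_A" for n
    using set_integral_W_minus_V(2)[OF q_le] .
  ultimately have "(\<integral>\<omega>. indicator B \<omega> * (W t \<omega> - W_tilde t \<omega>) \<partial>M) \<le> ?B (W t0) - ?B W_A"
    by (rule Fatou_integral_le(2))
  moreover have "(\<integral>\<omega>. indicator B \<omega> * (W t \<omega> - W_tilde t \<omega>) \<partial>M) = ?B (W t) - ?B (W_tilde t)"
    using integrable_mult_indicator[OF B_M integrable_W[OF t(1)]] set_integral_W_tilde_le(1)[OF assms]
    by (simp add: right_diff_distrib)
  moreover have "?B (W t) = ?B (W t0)"
    using set_integral_W_eq[OF t(1) less_imp_le[OF t(2)] B] .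
  ultimately show ?thesis by simp
qed

lemma W_tilde_eq_cond_exp_before_t0:
  assumes t: "0 \<le> t" "t < t0"
  shows "AE \<omega> in M. real_cond_exp M (F t) W_A \<omega> = W_tilde t \<omega>"
proof -
  interpret sigma_finite_subalgebra M "F t" using t(1) by (rule sigma_finite_subalgebra_F)
  have "integrable M (\<lambda>\<omega>. indicator (space M) \<omega> * W_tilde t \<omega>)"
    using set_integral_W_tilde_le(1)[OF t, of "space M"] sets.top[of "F t"] space_F[OF t(1)] by simp
  then have "integrable M (W_tilde t)"
    by (subst (asm) Bochner_Integration.integrable_cong[where g="W_tilde t"]) auto
  then show ?thesis
  proof (intro real_cond_exp_charact integrable_W_A W_tilde_adapted t)
    fix B
    assume "B \<in> sets (F t)"
    then show "(\<integral>\<omega>\<in>B. W_A \<omega> \<partial>M) = (\<integral>\<omega>\<in>B. W_tilde t \<omega> \<partial>M)"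
      using set_integral_W_tilde_le(2)[OF t] set_integral_W_tilde_ge[OF t]
      by (simp add: set_lebesgue_integral_def order_antisym)
  qed
qed

lemma W_tilde_eq_cond_exp:
  assumes t: "0 \<le> t"
  shows "AE \<omega> in M. W_tilde t \<omega> = real_cond_exp M (F t) (\<lambda>\<omega>. indicator A \<omega> * W (max t t0) \<omega>) \<omega>"
proof (cases "t < t0")
  case True
  then show ?thesis
    using W_tilde_eq_cond_exp_before_t0[OF t True] by (auto simp: W_A_def[abs_def] max_def)
next
  case False
  interpret sigma_finite_subalgebra M "F t" using t by (rule sigma_finite_subalgebra_F)
  have [measurable]: "A \<in> sets (F t)" "W t \<in> borel_measurable (F t)"
    using False A_in_F W_adapted[OF t] by auto
  have "AE \<omega> in M. real_cond_exp M (F t) (\<lambda>\<omega>. indicator A \<omega> * W t \<omega>) \<omega> = indicator A \<omega> * W t \<omega>"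
    using integrable_mult_indicator[OF A_in_M integrable_W[OF t]] by (intro real_cond_exp_F_meas) auto
  then show ?thesis
    using False by (auto simp: W_tilde_def max_def elim!: eventually_mono)
qed

lemma h_EZ_Ut_W_tilde:
  assumes s: "0 \<le> s"
  shows "AE \<omega> in M. h_EZ \<theta> (Ut s \<omega>) (W_tilde s \<omega>) =
           indicator A \<omega> * (if t0 \<le> s then h_EZ \<theta> (U s \<omega>) (W s \<omega>) else 0)"
proof (cases "t0 \<le> s")
  case False
  show ?thesis
    using Ut_eq[rule_format, OF s] AE_space
    by eventually_elim (use U_before_t0 s False in \<open>auto simp: h_EZ_def\<close>)
next
  case True
  interpret sigma_finite_subalgebra M "F s" using s by (rule sigma_finite_subalgebra_F)
  have "AE \<omega> in M. real_cond_exp M (F s) (indicator A) \<omega> = indicator A \<omega>"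
    using A_in_F[OF True] A_in_M by (intro real_cond_exp_F_meas) (auto simp: emeasure_eq_measure)
  with Ut_eq[rule_format, OF s] show ?thesis
    by eventually_elim (use True in \<open>auto simp: W_tilde_def h_EZ_def indicator_def\<close>)
qed

lemma utility_integral_W_tilde:
  assumes t: "0 \<le> t"
  shows "AE \<omega> in M. utility_integral \<theta> Ut W_tilde t \<omega> = indicator A \<omega> * UI (max t t0) \<omega>"
proof -
  let ?G = "\<lambda>s \<omega>. ennreal (h_EZ \<theta> (Ut (max 0 s) \<omega>) (W_tilde (max 0 s) \<omega>))"
  let ?H = "\<lambda>s \<omega>. ennreal (indicator A \<omega> * (if t0 \<le> s then h_EZ \<theta> (U (max 0 s) \<omega>) (W (max 0 s) \<omega>) else 0))"
  have [measurable]: "(\<lambda>p. X (max 0 (fst p)) (snd p)) \<in> borel_measurable (lborel \<Otimes>\<^sub>M M)"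
    if "X \<in> {U, W, Ut, W_tilde}" for X
    using that U_prog W_prog Ut_prog W_tilde_prog by (auto intro: prog_measurable_imp_borel_measurable_pair)
  have "AE \<omega> in M. (\<integral>\<^sup>+s\<in>{t..}. ?G s \<omega> \<partial>lborel) = (\<integral>\<^sup>+s\<in>{t..}. ?H s \<omega> \<partial>lborel)"
  proof (rule AE_nn_set_integral_cong)
    show "(\<lambda>p. ?G (fst p) (snd p)) \<in> borel_measurable (lborel \<Otimes>\<^sub>M M)"
      and "(\<lambda>p. ?H (fst p) (snd p)) \<in> borel_measurable (lborel \<Otimes>\<^sub>M M)"
      using A_in_M by measurable
    show "AE \<omega> in M. ?G s \<omega> = ?H s \<omega>" if "s \<in> {t..}" for s
      using h_EZ_Ut_W_tilde[of s] that t by (auto elim!: eventually_mono)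
  qed (auto intro: lborel.sigma_finite_measure_axioms sigma_finite_measure_axioms)
  moreover have "(\<integral>\<^sup>+s\<in>{t..}. ?H s \<omega> \<partial>lborel) = indicator A \<omega> * UI (max t t0) \<omega>" for \<omega>
    using t by (auto simp: utility_integral_def indicator_def intro!: nn_integral_cong)
  ultimately show ?thesis
    using t by (simp add: utility_integral_clamp)
qed

lemma utility_integral_W_tilde_finite: "(\<integral>\<^sup>+\<omega>. utility_integral \<theta> Ut W_tilde 0 \<omega> \<partial>M) < \<infinity>"
proof -
  have "(\<integral>\<^sup>+\<omega>. utility_integral \<theta> Ut W_tilde 0 \<omega> \<partial>M) = (\<integral>\<^sup>+\<omega>. indicator A \<omega> * UI t0 \<omega> \<partial>M)"
    using utility_integral_W_tilde[of 0] t0 by (intro nn_integral_cong_AE) simp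
  also have "\<dots> \<le> (\<integral>\<^sup>+\<omega>. UI 0 \<omega> \<partial>M)"
    using utility_integral_antimono[OF t0]
    by (intro nn_integral_mono) (auto simp: indicator_def)
  also have "\<dots> < \<infinity>"
    using W_utility by (simp add: utility_process_iff)
  finally show ?thesis .
qed

lemma W_tilde_eq_cond_exp_utility:
  assumes t: "0 \<le> t"
  shows "AE \<omega> in M. W_tilde t \<omega> =
           real_cond_exp M (F t) (\<lambda>\<omega>. enn2real (utility_integral \<theta> Ut W_tilde t \<omega>)) \<omega>"
proof -
  define t' where "t' = max t t0"
  have t': "0 \<le> t'" "t \<le> t'" "t0 \<le> t'" using t t0 by (auto simp: t'_def)
  interpret sigma_finite_subalgebra M "F t" using t by (rule sigma_finite_subalgebra_F)
  let ?Z = "\<lambda>\<omega>. enn2real (UI t' \<omega>)"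
  have [measurable]: "A \<in> sets (F t')" "A \<in> sets M" "?Z \<in> borel_measurable M"
    "W t' \<in> borel_measurable M" "utility_integral \<theta> Ut W_tilde t \<in> borel_measurable M"
    using A_in_F[OF t'(3)] A_in_M borel_measurable_utility_integral[OF U_prog W_prog t'(1)]
      W_measurable[OF t'(1)] borel_measurable_utility_integral[OF Ut_prog W_tilde_prog t]
    by auto
  have int: "integrable M (\<lambda>\<omega>. indicator A \<omega> * ?Z \<omega>)"
    using integrable_mult_indicator[OF A_in_M integrable_UI[OF t'(1)]] by simp
  have "AE \<omega> in M. real_cond_exp M (F t') (\<lambda>\<omega>. indicator A \<omega> * ?Z \<omega>) \<omega>
      = indicator A \<omega> * real_cond_exp M (F t') ?Z \<omega>"
    using int by (intro sigma_finite_subalgebra.real_cond_exp_mult[OF sigma_finite_subalgebra_F[OF t'(1)]])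
      measurable
  then have "AE \<omega> in M. real_cond_exp M (F t') (\<lambda>\<omega>. indicator A \<omega> * ?Z \<omega>) \<omega> = indicator A \<omega> * W t' \<omega>"
    using W_eq_cond_exp[OF t'(1)] by eventually_elim simp
  then have "AE \<omega> in M. real_cond_exp M (F t) (real_cond_exp M (F t') (\<lambda>\<omega>. indicator A \<omega> * ?Z \<omega>)) \<omega>
      = real_cond_exp M (F t) (\<lambda>\<omega>. indicator A \<omega> * W t' \<omega>) \<omega>"
    by (intro real_cond_exp_cong) measurable
  moreover have "AE \<omega> in M. real_cond_exp M (F t) (real_cond_exp M (F t') (\<lambda>\<omega>. indicator A \<omega> * ?Z \<omega>)) \<omega>
      = real_cond_exp M (F t) (\<lambda>\<omega>. indicator A \<omega> * ?Z \<omega>) \<omega>"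
    by (rule real_cond_exp_nested_subalg[OF subalgebra_F[OF t'(1)] subalgebra_F_F[OF t t'(2)] int])
  moreover have "AE \<omega> in M. enn2real (utility_integral \<theta> Ut W_tilde t \<omega>) = indicator A \<omega> * ?Z \<omega>"
    using utility_integral_W_tilde[OF t, folded t'_def]
    by eventually_elim (simp add: enn2real_mult indicator_def)
  then have "AE \<omega> in M. real_cond_exp M (F t) (\<lambda>\<omega>. enn2real (utility_integral \<theta> Ut W_tilde t \<omega>)) \<omega>
      = real_cond_exp M (F t) (\<lambda>\<omega>. indicator A \<omega> * ?Z \<omega>) \<omega>"
    by (intro real_cond_exp_cong) measurable
  ultimately show ?thesis
    using W_tilde_eq_cond_exp[OF t] by eventually_elim (simp add: t'_def)
qed

lemma utility_process_W_tilde: "utility_process M F (h_EZ \<theta>) Ut W_tilde"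
  unfolding utility_process_iff nonneg_process_def
  using W_tilde_nonneg W_tilde_cadlag W_tilde_prog utility_integral_W_tilde_finite
    W_tilde_eq_cond_exp_utility by blast

end

theorem lemma8p2:
  fixes M :: "'a measure" and F :: "real \<Rightarrow> 'a measure"
    and \<theta> t0 :: real and U W Ut :: "real \<Rightarrow> 'a \<Rightarrow> real" and A :: "'a set"
  assumes "std_filtration M F" and "\<theta> > 1"
    and "nonneg_process M U" and "prog_measurable M F U"
    and "utility_process M F (h_EZ \<theta>) U W"
    and "t0 \<ge> 0" and "\<forall>t. 0 \<le> t \<and> t < t0 \<longrightarrow> (\<forall>\<omega>\<in>space M. U t \<omega> = 0)"
    and "A \<in> sets (F t0)"
    and "nonneg_process M Ut" and "prog_measurable M F Ut"
    and "\<forall>t\<ge>0. AE \<omega> in M. Ut t \<omega> = real_cond_exp M (F t) (indicator A) \<omega> * U t \<omega>"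
  shows "\<exists>Wt. (\<forall>t\<ge>0. AE \<omega> in M.
              Wt t \<omega> = real_cond_exp M (F t) (\<lambda>\<omega>. indicator A \<omega> * W (max t t0) \<omega>) \<omega>)
          \<and> utility_process M F (h_EZ \<theta>) Ut Wt"
proof -
  interpret restricted_utility M F \<theta> t0 U W Ut A
    using assms by unfold_locales auto
  show ?thesis
    using W_tilde_eq_cond_exp utility_process_W_tilde by blast
qed

end
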